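(* Let $X,Y\in\mathcal{B}(\mathcal{H})$ and let $f,g$ be nonnegative continuous functions on $[0,\infty)$ satisfying $f(t)g(t)=t$ for all $t\geq 0$. Then for every unit vector $x\in\mathcal{H}$ and all $r,s\geq 1$, $$|\langle Xx,x\rangle|^r+|\langle Yx,x\rangle|^s\leq \frac12\left\|f^{2r}(|X|)+g^{2r}(|X^*|)+f^{2s}(|Y|)+g^{2s}(|Y^*|)\right\|.$$
   Context: $\mathcal{H}$ is a complex Hilbert space, $\mathcal{B}(\mathcal{H})$ the bounded linear operators on it. For $T\in\mathcal{B}(\mathcal{H})$, $|T|=(T^*T)^{1/2}$, and $f(|T|)$ etc. are defined by continuous functional calculus; $f^{2r}(|X|)$ means $(f(|X|))^{2r}$. *)

theory Defs
  imports "HOL-Analysis.Analysis" "HOL-Computational_Algebra.Polynomial"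
begin

class complex_vector = real_vector +
  fixes scaleC :: "complex \<Rightarrow> 'a \<Rightarrow> 'a"
  assumes scaleC_add_right: "scaleC c (x + y) = scaleC c x + scaleC c y"
    and scaleC_add_left: "scaleC (a + b) x = scaleC a x + scaleC b x"
    and scaleC_scaleC: "scaleC a (scaleC b x) = scaleC (a * b) x"
    and scaleC_one: "scaleC 1 x = x"
    and scaleC_of_real: "scaleC (complex_of_real r) x = r *\<^sub>R x"

class complex_inner = complex_vector + real_normed_vector +
  fixes cinner :: "'a \<Rightarrow> 'a \<Rightarrow> complex"
  assumes cinner_cnj: "cinner x y = cnj (cinner y x)"
    and cinner_add_left: "cinner (x + y) z = cinner x z + cinner y z"
    and cinner_scaleC_left: "cinner (scaleC c x) y = c * cinner x y"
    and cinner_self_real: "Im (cinner x x) = 0"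
    and cinner_self_nonneg: "0 \<le> Re (cinner x x)"
    and cinner_self_eq_0: "cinner x x = 0 \<longleftrightarrow> x = 0"
    and norm_cinner: "norm x = sqrt (Re (cinner x x))"

text \<open>A complex Hilbert space is a type of sort {complex_inner, complete_space}.
  Operators in B(H) are represented as functions satisfying cbounded.\<close>

definition cbounded :: "('a::complex_inner \<Rightarrow> 'a) \<Rightarrow> bool" where
  "cbounded T \<longleftrightarrow> (\<forall>x y. T (x + y) = T x + T y) \<and> (\<forall>c x. T (scaleC c x) = scaleC c (T x))
     \<and> (\<exists>K. \<forall>x. norm (T x) \<le> norm x * K)"

definition adj :: "('a::complex_inner \<Rightarrow> 'a) \<Rightarrow> ('a \<Rightarrow> 'a)" where
  "adj T = (\<lambda>y. THE z. \<forall>x. cinner (T x) y = cinner x z)"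

definition opoly :: "real poly \<Rightarrow> ('a::complex_inner \<Rightarrow> 'a) \<Rightarrow> ('a \<Rightarrow> 'a)" where
  "opoly p A = (\<lambda>x. \<Sum>i\<le>degree p. coeff p i *\<^sub>R (A ^^ i) x)"

text \<open>Continuous functional calculus for a positive operator A (spectrum in [0, norm A]):
  f(A) is the operator-norm limit of p_n(A) for every sequence of polynomials p_n
  converging uniformly to f on [0, norm A].\<close>
definition fcalc :: "(real \<Rightarrow> real) \<Rightarrow> ('a::complex_inner \<Rightarrow> 'a) \<Rightarrow> ('a \<Rightarrow> 'a)" where
  "fcalc f A = (THE B. cbounded B \<and>
     (\<forall>ps. uniform_limit {0..onorm A} (\<lambda>n t. poly (ps n) t) f sequentially \<longrightarrow>
        (\<lambda>n. onorm (\<lambda>x. opoly (ps n) A x - B x)) \<longlonglongrightarrow> 0))"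

definition oabs :: "('a::complex_inner \<Rightarrow> 'a) \<Rightarrow> ('a \<Rightarrow> 'a)" where
  "oabs T = fcalc sqrt (adj T \<circ> T)"

end

theory Submission
  imports Defs "HOL-Computational_Algebra.Fundamental_Theorem_Algebra"
begin

text \<open>
  For unit x, Kittaneh's mixed Schwarz inequality gives
  |<Xx,x>| \<le> \<parallel>f(|X|)x\<parallel> \<parallel>g(|X*|)x\<parallel>; by AM-GM,
  |<Xx,x>|^r \<le> (\<parallel>f(|X|)x\<parallel>^(2r) + \<parallel>g(|X*|)x\<parallel>^(2r))/2, and McCarty's
  inequality \<parallel>Fx\<parallel>^(2r) = <F^2 x,x>^r \<le> <F^(2r) x,x> for positive F and r \<ge> 1,
  a Jensen inequality for the convex function s^r, bounds this by
  <(f^(2r)(|X|) + g^(2r)(|X*|)) x,x>/2. Adding the same bound for Y and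
  estimating the quadratic form by the operator norm gives the theorem.

  The mixed Schwarz inequality |<Xx,y>|^2 \<le> <a(X*X)x,x> <b(XX*)y,y> for
  a b = id is the Cauchy-Schwarz inequality for the positive operator
  (b+\<epsilon>)^(-1)(XX*), combined with the intertwining relation
  X* h(XX*) X = (t h(t))(X*X).

  The functional calculus is only specified through polynomial approximation,
  so it has to be constructed: a polynomial that is nonnegative on [0,c] is a
  nonnegative combination of q^2, t q^2, (c-t) q^2 and t(c-t) q^2 (factor it
  over the complex numbers), hence p(A) is positive whenever p \<ge> 0 on
  [0,\<parallel>A\<parallel>]. Therefore \<parallel>p(A)\<parallel> \<le> sup |p| on [0,\<parallel>A\<parallel>], and
  polynomials converging uniformly to f give operators converging in norm.
\<close>

lemma cinner_scaleR_left: "cinner (r *\<^sub>R x) y = complex_of_real r * cinner x (y::'a::complex_inner)"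
  by (simp add: scaleC_of_real[symmetric] cinner_scaleC_left)

lemma cinner_zero_left[simp]: "cinner 0 (y::'a::complex_inner) = 0"
  using cinner_scaleR_left[of 0 y y] by simp

lemma cinner_add_right: "cinner x (y + z) = cinner x y + cinner x (z::'a::complex_inner)"
  by (subst (1 2 3) cinner_cnj) (simp add: cinner_add_left)

lemma cinner_scaleC_right: "cinner x (scaleC c y) = cnj c * cinner x (y::'a::complex_inner)"
  by (subst (1 2) cinner_cnj) (simp add: cinner_scaleC_left)

lemma cinner_scaleR_right: "cinner x (r *\<^sub>R y) = complex_of_real r * cinner x (y::'a::complex_inner)"
  by (simp add: scaleC_of_real[symmetric] cinner_scaleC_right)

lemma cinner_zero_right[simp]: "cinner x (0::'a::complex_inner) = 0"
  using cinner_scaleR_right[of x 0 x] by simp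

lemma cinner_minus_left: "cinner (- x) y = - cinner x (y::'a::complex_inner)"
  using cinner_scaleR_left[of "-1" x y] by simp

lemma cinner_minus_right: "cinner x (- y) = - cinner x (y::'a::complex_inner)"
  using cinner_scaleR_right[of x "-1" y] by simp

lemma cinner_diff_left: "cinner (x - y) z = cinner x z - cinner y (z::'a::complex_inner)"
  using cinner_add_left[of x "-y" z] by (simp add: cinner_minus_left)

lemma cinner_self: "cinner x x = complex_of_real ((norm (x::'a::complex_inner))^2)"
  using norm_cinner[of x] cinner_self_nonneg[of x] cinner_self_real[of x] by (simp add: complex_eq_iff)

lemma Re_cinner_self: "Re (cinner x x) = (norm (x::'a::complex_inner))^2"
  by (simp add: cinner_self)

lemma cinner_ext: "(\<And>z. cinner x z = cinner y z) \<Longrightarrow> x = (y::'a::complex_inner)"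
  using cinner_self_eq_0[of "x - y"] by (simp add: cinner_diff_left)

lemma cinner_ext_right: "(\<And>z. cinner z x = cinner z y) \<Longrightarrow> x = (y::'a::complex_inner)"
  by (rule cinner_ext) (subst (1 2) cinner_cnj, simp)

lemma mult_cnj_eq_cmod_power2: "z * cnj z = (complex_of_real (cmod z))^2"
  by (metis complex_norm_square of_real_power)

lemma cnj_mult_eq_cmod_power2: "cnj z * z = (complex_of_real (cmod z))^2"
  by (metis mult_cnj_eq_cmod_power2 mult.commute)

lemma complex_discriminant_le:
  fixes a d :: real and b :: complex
  assumes d: "0 \<le> d" and Q: "\<And>t. 0 \<le> a + 2 * Re (cnj t * b) + (cmod t)^2 * d"
  shows "(cmod b)^2 \<le> a * d"
proof (cases "d = 0")
  case False
  then have d0: "d > 0" using d by simp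
  have "0 \<le> a + 2 * Re (cnj (- b / complex_of_real d) * b) + (cmod (- b / complex_of_real d))^2 * d"
    by (rule Q)
  also have "cnj (- b / complex_of_real d) * b = - complex_of_real ((cmod b)^2 / d)"
    by (simp add: cnj_mult_eq_cmod_power2)
  also have "(cmod (- b / complex_of_real d))^2 * d = (cmod b)^2 / d"
    using d0 by (simp add: norm_divide power_divide power2_eq_square)
  finally have "0 \<le> a - (cmod b)^2 / d" by simp
  then show ?thesis using d0 by (simp add: field_simps)
next
  case True
  show ?thesis
  proof (cases "b = 0")
    case False
    define s where "s = (\<bar>a\<bar> + 1) / (2 * (cmod b)^2)"
    have "0 \<le> a + 2 * Re (cnj (- complex_of_real s * b) * b) + (cmod (- complex_of_real s * b))^2 * d"
      by (rule Q)
    also have "cnj (- complex_of_real s * b) * b = - complex_of_real (s * (cmod b)^2)"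
      by (simp add: cnj_mult_eq_cmod_power2)
    finally have "0 \<le> a - 2 * s * (cmod b)^2" using True by simp
    also have "2 * s * (cmod b)^2 = \<bar>a\<bar> + 1" using False by (simp add: s_def)
    finally show ?thesis by linarith
  qed (simp add: True)
qed

lemma power2_norm_add:
  "(norm (x + y))^2 = (norm x)^2 + (norm y)^2 + 2 * Re (cinner x (y::'a::complex_inner))"
proof -
  have "cinner (x + y) (x + y) = cinner x x + cinner x y + cinner y x + cinner y y"
    by (simp add: cinner_add_left cinner_add_right)
  then show ?thesis by (simp add: Re_cinner_self[symmetric] cinner_cnj[of y x])
qed

lemma norm_scaleC: "norm (scaleC c x) = cmod c * norm (x::'a::complex_inner)"
proof -
  have "complex_of_real ((norm (scaleC c x))^2) = cinner (scaleC c x) (scaleC c x)"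
    by (simp only: cinner_self)
  also have "\<dots> = c * cnj c * cinner x x"
    by (simp add: cinner_scaleC_left cinner_scaleC_right)
  also have "\<dots> = complex_of_real ((cmod c)^2) * complex_of_real ((norm x)^2)"
    by (metis complex_norm_square cinner_self)
  finally have "(norm (scaleC c x))^2 = (cmod c * norm x)^2"
    by (metis of_real_eq_iff of_real_mult power_mult_distrib)
  then show ?thesis by (simp add: power2_eq_iff_nonneg)
qed

lemma power2_norm_add_scaleC:
  "(norm (z + scaleC t n))^2 = (norm z)^2 + 2 * Re (cnj t * cinner z n) + (cmod t)^2 * (norm (n::'a::complex_inner))^2"
  by (simp add: power2_norm_add norm_scaleC cinner_scaleC_right power_mult_distrib)

lemma parallelogram_law:
  "(norm (u + v))^2 + (norm (u - v))^2 = 2 * (norm u)^2 + 2 * (norm (v::'a::complex_inner))^2"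
  using power2_norm_add[of u v] power2_norm_add[of u "-v"] by (simp add: cinner_minus_right)

lemma cinner_Cauchy_Schwarz: "cmod (cinner x y) \<le> norm x * norm (y::'a::complex_inner)"
proof -
  have "(cmod (cinner x y))^2 \<le> (norm x)^2 * (norm y)^2"
  proof (rule complex_discriminant_le)
    fix t
    have "0 \<le> (norm (x + scaleC t y))^2" by simp
    then show "0 \<le> (norm x)^2 + 2 * Re (cnj t * cinner x y) + (cmod t)^2 * (norm y)^2"
      by (simp only: power2_norm_add_scaleC)
  qed simp
  then have "(cmod (cinner x y))^2 \<le> (norm x * norm y)^2" by (simp add: power_mult_distrib)
  then show ?thesis by (rule power2_le_imp_le) simp
qed

lemma bounded_linear_cinner_left: "bounded_linear (\<lambda>a::'a::complex_inner. cinner a y)"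
  by (rule bounded_linear_intro[of _ "norm y"])
     (simp_all add: cinner_add_left cinner_scaleR_left scaleR_conv_of_real cinner_Cauchy_Schwarz)

lemma bounded_linear_cinner_right: "bounded_linear (\<lambda>b::'a::complex_inner. cinner y b)"
proof (rule bounded_linear_intro[of _ "norm y"])
  fix x show "norm (cinner y x) \<le> norm x * norm y"
    using cinner_Cauchy_Schwarz[of y x] by (simp add: mult.commute)
qed (simp_all add: cinner_add_right cinner_scaleR_right scaleR_conv_of_real)

lemma tendsto_cinner_left:
  "(a \<longlongrightarrow> l) F \<Longrightarrow> ((\<lambda>n. cinner (a n) y) \<longlongrightarrow> cinner l (y::'a::complex_inner)) F"
  by (rule bounded_linear.tendsto[OF bounded_linear_cinner_left])

lemma tendsto_cinner_right:
  "(a \<longlongrightarrow> l) F \<Longrightarrow> ((\<lambda>n. cinner y (a n)) \<longlongrightarrow> cinner (y::'a::complex_inner) l) F"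
  by (rule bounded_linear.tendsto[OF bounded_linear_cinner_right])

lemma orthogonal_if_min_norm_on_line:
  assumes "\<And>t. norm z \<le> norm (z + scaleC t n)"
  shows "cinner z (n::'a::complex_inner) = 0"
proof -
  have "(cmod (cinner z n))^2 \<le> 0 * (norm n)^2"
  proof (rule complex_discriminant_le)
    fix t
    have "(norm z)^2 \<le> (norm (z + scaleC t n))^2" using assms[of t] by (simp add: power_mono)
    then show "0 \<le> 0 + 2 * Re (cnj t * cinner z n) + (cmod t)^2 * (norm n)^2"
      by (simp add: power2_norm_add_scaleC)
  qed simp
  then show ?thesis by simp
qed

lemma cbounded_add: "cbounded T \<Longrightarrow> T (x + y) = T x + T y"
  by (simp add: cbounded_def)

lemma cbounded_scaleC: "cbounded T \<Longrightarrow> T (scaleC c x) = scaleC c (T x)"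
  by (simp add: cbounded_def)

lemma cbounded_scaleR: "cbounded T \<Longrightarrow> T (r *\<^sub>R x) = r *\<^sub>R (T x)"
  by (metis cbounded_scaleC scaleC_of_real)

lemma cbounded_bounded_linear: "cbounded T \<Longrightarrow> bounded_linear T"
  unfolding cbounded_def
  by (auto intro!: bounded_linear_intro simp: scaleC_of_real[symmetric])

lemma cbounded_zero: "cbounded T \<Longrightarrow> T 0 = 0"
  using cbounded_bounded_linear linear_simps(3) by blast

lemma cbounded_minus: "cbounded T \<Longrightarrow> T (- x) = - T x"
  using cbounded_bounded_linear linear_simps(4) by blast

lemma cbounded_diff: "cbounded T \<Longrightarrow> T (x - y) = T x - T y"
  using cbounded_bounded_linear linear_simps(2) by blast

lemma cbounded_sum: "cbounded T \<Longrightarrow> T (\<Sum>i\<in>I. f i) = (\<Sum>i\<in>I. T (f i))"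
  using cbounded_bounded_linear bounded_linear.linear linear_sum by blast

lemma cbounded_onorm: "cbounded T \<Longrightarrow> norm (T x) \<le> onorm T * norm x"
  using cbounded_bounded_linear onorm by blast

lemma cbounded_onorm_nonneg: "cbounded T \<Longrightarrow> 0 \<le> onorm T"
  using cbounded_bounded_linear onorm_pos_le by blast

lemma tendsto_cbounded: "cbounded T \<Longrightarrow> (a \<longlongrightarrow> l) F \<Longrightarrow> ((\<lambda>n. T (a n)) \<longlongrightarrow> T l) F"
  by (rule bounded_linear.tendsto[OF cbounded_bounded_linear])

lemma cboundedI:
  assumes "\<And>x y. T (x + y) = T x + T y" "\<And>c x. T (scaleC c x) = scaleC c (T x)"
    and "\<And>x. norm (T x) \<le> norm x * K"
  shows "cbounded T"
  using assms unfolding cbounded_def by blast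

lemma scaleC_scaleR_commute: "scaleC c (r *\<^sub>R x) = r *\<^sub>R scaleC c (x::'a::complex_vector)"
  by (metis scaleC_of_real scaleC_scaleC mult.commute)

lemma scaleC_zero_right[simp]: "scaleC c (0::'a::complex_vector) = 0"
  using scaleC_scaleR_commute[of c 0 0] by simp

lemma bounded_linear_scaleC: "bounded_linear (\<lambda>x::'a::complex_inner. scaleC c x)"
  by (rule bounded_linear_intro[of _ "cmod c"])
     (simp_all add: scaleC_add_right scaleC_scaleR_commute norm_scaleC)

lemma cbounded_id: "cbounded (\<lambda>x. x)"
  by (rule cboundedI[where K=1]) auto

lemma cbounded_zero_op: "cbounded (\<lambda>x. 0)"
  by (rule cboundedI[where K=0]) auto

lemma cbounded_comp:
  assumes S: "cbounded S" and T: "cbounded T"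
  shows "cbounded (\<lambda>x. S (T x))"
proof (rule cboundedI[where K="onorm T * onorm S"])
  fix x
  have "norm (S (T x)) \<le> onorm S * (onorm T * norm x)"
    using cbounded_onorm[OF S] cbounded_onorm[OF T] cbounded_onorm_nonneg[OF S]
    by (meson mult_left_mono order_trans)
  then show "norm (S (T x)) \<le> norm x * (onorm T * onorm S)" by (simp add: ac_simps)
qed (simp_all add: cbounded_add[OF S] cbounded_add[OF T] cbounded_scaleC[OF S] cbounded_scaleC[OF T])

lemma cbounded_o: "cbounded S \<Longrightarrow> cbounded T \<Longrightarrow> cbounded (S \<circ> T)"
  using cbounded_comp[of S T] by (simp add: comp_def)

lemma cbounded_plus:
  assumes S: "cbounded S" and T: "cbounded T"
  shows "cbounded (\<lambda>x. S x + T x)"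
proof (rule cboundedI[where K="onorm S + onorm T"])
  fix x
  have "norm (S x + T x) \<le> onorm S * norm x + onorm T * norm x"
    using norm_triangle_ineq[of "S x" "T x"] cbounded_onorm[OF S, of x] cbounded_onorm[OF T, of x]
    by linarith
  then show "norm (S x + T x) \<le> norm x * (onorm S + onorm T)" by (simp add: algebra_simps)
qed (simp_all add: cbounded_add[OF S] cbounded_add[OF T] cbounded_scaleC[OF S] cbounded_scaleC[OF T]
      scaleC_add_right)

lemma cbounded_scaleR_op:
  assumes T: "cbounded T"
  shows "cbounded (\<lambda>x. r *\<^sub>R T x)"
proof (rule cboundedI[where K="\<bar>r\<bar> * onorm T"])
  fix x
  show "norm (r *\<^sub>R T x) \<le> norm x * (\<bar>r\<bar> * onorm T)"
    using mult_left_mono[OF cbounded_onorm[OF T, of x], of "\<bar>r\<bar>"] by (simp add: ac_simps)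
qed (simp_all add: cbounded_add[OF T] cbounded_scaleC[OF T] scaleR_add_right scaleC_scaleR_commute)

lemma cbounded_diff_op: "cbounded S \<Longrightarrow> cbounded T \<Longrightarrow> cbounded (\<lambda>x. S x - T x)"
  using cbounded_plus[of S "\<lambda>x. (-1) *\<^sub>R T x"] cbounded_scaleR_op[of T "-1"] by simp

lemma Re_cinner_le_onorm:
  assumes "cbounded T"
  shows "Re (cinner (T x) x) \<le> onorm T * (norm x)^2"
proof -
  have "Re (cinner (T x) x) \<le> norm (T x) * norm x"
    using complex_Re_le_cmod cinner_Cauchy_Schwarz order_trans by blast
  also have "\<dots> \<le> onorm T * norm x * norm x"
    by (rule mult_right_mono[OF cbounded_onorm[OF assms]]) simp
  finally show ?thesis by (simp add: power2_eq_square ac_simps)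
qed

section \<open>Riesz representation and the adjoint\<close>

lemma inv_Suc_tendsto: "(\<lambda>n. 1 / (real n + 1)) \<longlonglongrightarrow> 0"
  using LIMSEQ_inverse_real_of_nat by (simp add: inverse_eq_divide add.commute)

lemma Cauchy_if_dist_le_add:
  fixes X :: "nat \<Rightarrow> 'a::metric_space"
  assumes dist: "\<And>m n. dist (X m) (X n) \<le> e m + e n" and e: "e \<longlonglongrightarrow> 0"
  shows "Cauchy X"
proof (rule metric_CauchyI)
  fix \<epsilon> :: real assume "0 < \<epsilon>"
  then obtain N where N: "\<And>n. n \<ge> N \<Longrightarrow> \<bar>e n\<bar> < \<epsilon> / 2"
    using LIMSEQ_D[OF e, of "\<epsilon> / 2"] by auto
  show "\<exists>M. \<forall>m\<ge>M. \<forall>n\<ge>M. dist (X m) (X n) < \<epsilon>"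
  proof (intro exI allI impI)
    fix m n assume "m \<ge> N" "n \<ge> N"
    then show "dist (X m) (X n) < \<epsilon>" using dist[of m n] N[of m] N[of n] by linarith
  qed
qed

lemma power2_dist_le_if_midpoint_norm_ge:
  fixes u v :: "'a::complex_inner"
  assumes "d \<le> (norm ((1/2) *\<^sub>R (u + v)))^2"
  shows "(dist u v)^2 \<le> 2 * (norm u)^2 + 2 * (norm v)^2 - 4 * d"
proof -
  have "4 * d \<le> (norm (u + v))^2"
    using assms by (simp add: power_mult_distrib power2_eq_square)
  then show ?thesis using parallelogram_law[of u v] by (simp add: dist_norm)
qed

lemma closed_convex_has_min_norm:
  fixes S :: "'a::{complex_inner,complete_space} set"
  assumes "closed S" "convex S" "S \<noteq> {}"
  obtains z where "z \<in> S" "\<And>v. v \<in> S \<Longrightarrow> norm z \<le> norm v"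
proof -
  define d where "d = Inf ((\<lambda>v. (norm v)^2) ` S)"
  have d_le: "d \<le> (norm v)^2" if "v \<in> S" for v
    unfolding d_def by (rule cInf_lower) (use that in \<open>auto intro: bdd_belowI[of _ 0]\<close>)
  have "\<exists>v\<in>S. (norm v)^2 < d + 1 / (real n + 1)" for n
    using cInf_lessD[of "(\<lambda>v. (norm v)^2) ` S" "d + 1 / (real n + 1)"] assms(3)
    by (auto simp: d_def)
  then obtain xs where xsS: "\<And>n. xs n \<in> S" and xs: "\<And>n. (norm (xs n))^2 < d + 1 / (real n + 1)"
    by metis
  define e where "e n = sqrt (2 / (real n + 1))" for n
  have "dist (xs m) (xs n) \<le> e m + e n" for m n
  proof -
    have "(1/2) *\<^sub>R (xs m + xs n) \<in> S"
      using convexD[OF assms(2) xsS xsS, of "1/2" "1/2" m n] by (simp add: scaleR_add_right)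
    then have "(dist (xs m) (xs n))^2 \<le> 2 / (real m + 1) + 2 / (real n + 1)"
      using power2_dist_le_if_midpoint_norm_ge[OF d_le] xs[of m] xs[of n] by fastforce
    then have "dist (xs m) (xs n) \<le> sqrt (2 / (real m + 1) + 2 / (real n + 1))"
      using real_le_rsqrt by blast
    also have "\<dots> \<le> e m + e n" unfolding e_def by (rule sqrt_add_le_add_sqrt) auto
    finally show ?thesis .
  qed
  moreover have "e \<longlonglongrightarrow> 0"
    unfolding e_def using tendsto_real_sqrt[OF tendsto_mult_right_zero[OF inv_Suc_tendsto, of 2]] by simp
  ultimately have "Cauchy xs" by (rule Cauchy_if_dist_le_add)
  then obtain z where lim: "xs \<longlonglongrightarrow> z" using Cauchy_convergent_iff convergent_def by blast
  have "z \<in> S" using assms(1) xsS lim closed_sequentially by blast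
  moreover have "(norm z)^2 \<le> d"
  proof (rule LIMSEQ_le[OF tendsto_power[OF tendsto_norm[OF lim]]])
    show "(\<lambda>n. d + 1 / (real n + 1)) \<longlonglongrightarrow> d"
      using tendsto_add[OF tendsto_const inv_Suc_tendsto, of d] by simp
  qed (use xs less_imp_le in blast)
  ultimately show ?thesis using that d_le by (meson norm_ge_zero order_trans power2_le_imp_le)
qed

lemma riesz_representation:
  fixes \<phi> :: "'a::{complex_inner,complete_space} \<Rightarrow> complex"
  assumes add: "\<And>x y. \<phi> (x + y) = \<phi> x + \<phi> y"
    and scale: "\<And>c x. \<phi> (scaleC c x) = c * \<phi> x"
    and bound: "\<And>x. cmod (\<phi> x) \<le> norm x * K"
  shows "\<exists>z. \<forall>x. \<phi> x = cinner x z"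
proof (cases "\<forall>x. \<phi> x = 0")
  case True then show ?thesis by (intro exI[of _ 0]) simp
next
  case False
  then obtain w where w: "\<phi> w \<noteq> 0" by blast
  have scaleR: "\<phi> (r *\<^sub>R x) = r *\<^sub>R \<phi> x" for r x
    using scale[of "complex_of_real r" x] by (simp add: scaleC_of_real scaleR_conv_of_real)
  have "bounded_linear \<phi>"
    by (rule bounded_linear_intro[of _ K]) (simp_all add: add scaleR bound)
  then have "closed {x. \<phi> x = 1}"
    by (intro closed_Collect_eq linear_continuous_on continuous_on_const)
  moreover have "convex {x. \<phi> x = 1}"
    by (auto simp: convex_def add scaleR scaleR_conv_of_real simp flip: distrib_right of_real_add)
  moreover have "scaleC (1 / \<phi> w) w \<in> {x. \<phi> x = 1}" using w by (simp add: scale)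
  then have "{x. \<phi> x = 1} \<noteq> {}" by blast
  ultimately obtain z0 where z0: "z0 \<in> {x. \<phi> x = 1}"
    and min: "\<And>v. v \<in> {x. \<phi> x = 1} \<Longrightarrow> norm z0 \<le> norm v"
    by (rule closed_convex_has_min_norm) blast
  have z0_nz: "z0 \<noteq> 0" using z0 scaleR[of 0 z0] by auto
  show ?thesis
  proof (intro exI allI)
    fix x
    define n where "n = x - scaleC (\<phi> x) z0"
    have "\<phi> n = 0" using z0 add[of n "scaleC (\<phi> x) z0"] by (simp add: n_def scale)
    then have "cinner z0 n = 0"
      using z0 by (intro orthogonal_if_min_norm_on_line min) (simp add: add scale)
    then have "cinner n z0 = 0" by (metis cinner_cnj complex_cnj_zero)
    then have "cinner x z0 = \<phi> x * complex_of_real ((norm z0)^2)"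
      by (simp add: n_def cinner_diff_left cinner_scaleC_left cinner_self)
    then show "\<phi> x = cinner x (scaleC (complex_of_real (1 / (norm z0)^2)) z0)"
      using z0_nz by (simp add: cinner_scaleC_right field_simps)
  qed
qed

lemma ex1_adj:
  assumes T: "cbounded (T::'a::{complex_inner,complete_space} \<Rightarrow> 'a)"
  shows "\<exists>!z. \<forall>x. cinner (T x) y = cinner x z"
proof (rule ex_ex1I)
  obtain K where K: "\<And>x. norm (T x) \<le> norm x * K" using T unfolding cbounded_def by blast
  show "\<exists>z. \<forall>x. cinner (T x) y = cinner x z"
  proof (rule riesz_representation[where K="K * norm y"])
    fix x
    have "cmod (cinner (T x) y) \<le> norm (T x) * norm y" by (rule cinner_Cauchy_Schwarz)
    also have "\<dots> \<le> norm x * K * norm y" by (rule mult_right_mono[OF K]) simp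
    finally show "cmod (cinner (T x) y) \<le> norm x * (K * norm y)" by (simp add: ac_simps)
  qed (simp_all add: cbounded_add[OF T] cbounded_scaleC[OF T] cinner_add_left cinner_scaleC_left)
next
  fix z1 z2 assume "\<forall>x. cinner (T x) y = cinner x z1" "\<forall>x. cinner (T x) y = cinner x z2"
  then show "z1 = z2" by (intro cinner_ext_right) auto
qed

lemma cinner_adj_right:
  assumes "cbounded (T::'a::{complex_inner,complete_space} \<Rightarrow> 'a)"
  shows "cinner (T x) y = cinner x (adj T y)"
  using theI'[OF ex1_adj[OF assms, of y]] unfolding adj_def by blast

lemma cinner_adj_left:
  assumes "cbounded (T::'a::{complex_inner,complete_space} \<Rightarrow> 'a)"
  shows "cinner (adj T y) x = cinner y (T x)"
  using cinner_adj_right[OF assms, of x y] by (metis cinner_cnj)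

lemma cbounded_adj:
  assumes T: "cbounded (T::'a::{complex_inner,complete_space} \<Rightarrow> 'a)"
  shows "cbounded (adj T)"
proof (rule cboundedI[where K="onorm T"])
  fix x y
  show "adj T (x + y) = adj T x + adj T y"
    by (rule cinner_ext_right) (simp add: cinner_adj_right[OF T, symmetric] cinner_add_right)
next
  fix c x
  show "adj T (scaleC c x) = scaleC c (adj T x)"
    by (rule cinner_ext_right) (simp add: cinner_adj_right[OF T, symmetric] cinner_scaleC_right)
next
  fix y
  have "(norm (adj T y))^2 = Re (cinner (T (adj T y)) y)"
    by (simp add: cinner_adj_right[OF T] Re_cinner_self)
  also have "\<dots> \<le> norm (T (adj T y)) * norm y"
    using complex_Re_le_cmod cinner_Cauchy_Schwarz order_trans by blast
  also have "\<dots> \<le> onorm T * norm (adj T y) * norm y"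
    by (rule mult_right_mono[OF cbounded_onorm[OF T]]) simp
  finally have "norm (adj T y) * norm (adj T y) \<le> norm (adj T y) * (norm y * onorm T)"
    by (simp add: power2_eq_square ac_simps)
  then show "norm (adj T y) \<le> norm y * onorm T"
    using cbounded_onorm_nonneg[OF T]
    by (cases "norm (adj T y) = 0") (auto simp: mult_le_cancel_left_pos)
qed

lemma adj_adj:
  assumes T: "cbounded (T::'a::{complex_inner,complete_space} \<Rightarrow> 'a)"
  shows "adj (adj T) = T"
proof
  fix y
  show "adj (adj T) y = T y"
    by (rule cinner_ext_right) (simp add: cinner_adj_right[OF cbounded_adj[OF T], symmetric] cinner_adj_left[OF T])
qed

definition selfadjoint :: "('a::complex_inner \<Rightarrow> 'a) \<Rightarrow> bool" where
  "selfadjoint T \<longleftrightarrow> (\<forall>x y. cinner (T x) y = cinner x (T y))"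

definition positive_op :: "('a::complex_inner \<Rightarrow> 'a) \<Rightarrow> bool" where
  "positive_op T \<longleftrightarrow> cbounded T \<and> selfadjoint T \<and> (\<forall>x. 0 \<le> Re (cinner (T x) x))"

lemma positive_op_cbounded: "positive_op A \<Longrightarrow> cbounded A"
  unfolding positive_op_def by blast

lemma positive_op_selfadjoint: "positive_op A \<Longrightarrow> cinner (A x) y = cinner x (A y)"
  unfolding positive_op_def selfadjoint_def by blast

lemma positive_op_nonneg: "positive_op A \<Longrightarrow> 0 \<le> Re (cinner (A x) x)"
  unfolding positive_op_def by blast

lemma positive_op_onorm_nonneg: "positive_op A \<Longrightarrow> 0 \<le> onorm A"
  using cbounded_onorm_nonneg positive_op_cbounded by blast

lemma positive_op_adj_comp:
  assumes X: "cbounded (X::'a::{complex_inner,complete_space} \<Rightarrow> 'a)"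
  shows "positive_op (adj X \<circ> X)"
  unfolding positive_op_def selfadjoint_def
  by (simp add: cbounded_o[OF cbounded_adj[OF X] X] cinner_adj_left[OF X]
      cinner_adj_right[OF X, symmetric] Re_cinner_self)

lemma positive_op_comp_adj:
  assumes X: "cbounded (X::'a::{complex_inner,complete_space} \<Rightarrow> 'a)"
  shows "positive_op (X \<circ> adj X)"
  using positive_op_adj_comp[OF cbounded_adj[OF X]] by (simp add: adj_adj[OF X])

lemma positive_op_Cauchy_Schwarz:
  assumes A: "positive_op A"
  shows "(cmod (cinner (A u) v))^2 \<le> Re (cinner (A u) u) * Re (cinner (A v) v)"
proof (rule complex_discriminant_le)
  show "0 \<le> Re (cinner (A v) v)" by (rule positive_op_nonneg[OF A])
  fix t
  have cb: "cbounded A" by (rule positive_op_cbounded[OF A])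
  have vu: "cinner (A v) u = cnj (cinner (A u) v)"
    by (metis cinner_cnj positive_op_selfadjoint[OF A])
  have "cinner (A (u + scaleC t v)) (u + scaleC t v)
     = cinner (A u) u + cnj t * cinner (A u) v + t * cnj (cinner (A u) v) + t * cnj t * cinner (A v) v"
    by (simp add: cbounded_add[OF cb] cbounded_scaleC[OF cb] cinner_add_left cinner_add_right
        cinner_scaleC_left cinner_scaleC_right vu algebra_simps)
  moreover have "0 \<le> Re (cinner (A (u + scaleC t v)) (u + scaleC t v))" by (rule positive_op_nonneg[OF A])
  moreover have "t * cnj t = complex_of_real ((cmod t)^2)" by (metis complex_norm_square)
  ultimately show "0 \<le> Re (cinner (A u) u) + 2 * Re (cnj t * cinner (A u) v) + (cmod t)^2 * Re (cinner (A v) v)"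
    by simp
qed

lemma positive_op_power2_norm_le:
  assumes A: "positive_op A" and c: "onorm A \<le> c"
  shows "(norm (A y))^2 \<le> c * Re (cinner (A y) y)"
proof -
  have cb: "cbounded A" by (rule positive_op_cbounded[OF A])
  have r0: "0 \<le> Re (cinner (A y) y)" by (rule positive_op_nonneg[OF A])
  have "((norm (A y))^2)^2 = (cmod (cinner (A y) (A y)))^2"
    by (simp add: cinner_self norm_power)
  also have "\<dots> \<le> Re (cinner (A y) y) * Re (cinner (A (A y)) (A y))"
    by (rule positive_op_Cauchy_Schwarz[OF A])
  also have "\<dots> \<le> Re (cinner (A y) y) * (c * (norm (A y))^2)"
    using Re_cinner_le_onorm[OF cb, of "A y"] mult_right_mono[OF c, of "(norm (A y))^2"] r0
    by (simp add: mult_left_mono)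
  finally have *: "(norm (A y))^2 * (norm (A y))^2 \<le> (c * Re (cinner (A y) y)) * (norm (A y))^2"
    by (simp add: power2_eq_square[of "(norm (A y))^2"] ac_simps)
  show ?thesis
  proof (cases "A y = 0")
    case True
    then show ?thesis using r0 cbounded_onorm_nonneg[OF cb] c by simp
  next
    case False
    then have "0 < (norm (A y))^2" by simp
    then show ?thesis using * mult_le_cancel_right_pos by blast
  qed
qed

lemma opoly_eq_sum_atMost:
  assumes "degree p \<le> n"
  shows "opoly p A x = (\<Sum>i\<le>n. coeff p i *\<^sub>R (A ^^ i) x)"
proof -
  have "(\<Sum>i\<le>n. coeff p i *\<^sub>R (A ^^ i) x) = (\<Sum>i\<le>degree p. coeff p i *\<^sub>R (A ^^ i) x)"
    using assms by (intro sum.mono_neutral_right) (auto simp: coeff_eq_0)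
  then show ?thesis by (simp add: opoly_def)
qed

lemma opoly_0[simp]: "opoly 0 A x = 0"
  by (simp add: opoly_def)

lemma opoly_pCons:
  assumes A: "cbounded A"
  shows "opoly (pCons a p) A x = a *\<^sub>R x + A (opoly p A x)"
proof -
  have "opoly (pCons a p) A x = (\<Sum>i\<le>Suc (degree p). coeff (pCons a p) i *\<^sub>R (A ^^ i) x)"
    by (rule opoly_eq_sum_atMost) (simp add: degree_pCons_le)
  also have "\<dots> = a *\<^sub>R x + (\<Sum>i\<le>degree p. coeff p i *\<^sub>R (A ^^ Suc i) x)"
    unfolding sum.atMost_Suc_shift by simp
  also have "(\<Sum>i\<le>degree p. coeff p i *\<^sub>R (A ^^ Suc i) x) = A (opoly p A x)"
    by (simp add: opoly_def cbounded_sum[OF A] cbounded_scaleR[OF A])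
  finally show ?thesis .
qed

lemma opoly_add: "opoly (p + q) A x = opoly p A x + opoly q A x"
proof -
  let ?n = "max (degree p) (degree q)"
  have "opoly (p + q) A x = (\<Sum>i\<le>?n. coeff (p + q) i *\<^sub>R (A ^^ i) x)"
    by (rule opoly_eq_sum_atMost) (simp add: degree_add_le)
  also have "\<dots> = (\<Sum>i\<le>?n. coeff p i *\<^sub>R (A ^^ i) x) + (\<Sum>i\<le>?n. coeff q i *\<^sub>R (A ^^ i) x)"
    by (simp add: scaleR_add_left sum.distrib)
  also have "\<dots> = opoly p A x + opoly q A x"
    using opoly_eq_sum_atMost[of p ?n A x] opoly_eq_sum_atMost[of q ?n A x] by simp
  finally show ?thesis .
qed

lemma opoly_smult: "opoly (smult a p) A x = a *\<^sub>R opoly p A x"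
proof -
  have "opoly (smult a p) A x = (\<Sum>i\<le>degree p. coeff (smult a p) i *\<^sub>R (A ^^ i) x)"
    by (rule opoly_eq_sum_atMost) (simp add: degree_smult_le)
  also have "\<dots> = a *\<^sub>R opoly p A x"
    by (simp add: opoly_def scaleR_sum_right)
  finally show ?thesis .
qed

lemma opoly_minus: "opoly (- p) A x = - opoly p A x"
  using opoly_smult[of "-1" p A x] by simp

lemma opoly_diff: "opoly (p - q) A x = opoly p A x - opoly q A x"
  using opoly_add[of p "-q" A x] opoly_minus[of q A x] by simp

lemma opoly_const: "opoly [:c:] A x = c *\<^sub>R x"
  by (simp add: opoly_def)

lemma opoly_one: "opoly 1 A x = x"
  using opoly_const[of 1 A x] by (simp add: one_pCons)

lemma opoly_X: "cbounded A \<Longrightarrow> opoly [:0, 1:] A x = A x"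
  by (simp add: opoly_pCons opoly_const)

lemma opoly_cbounded: "cbounded A \<Longrightarrow> cbounded (opoly p A)"
proof (induction p rule: pCons_induct)
  case 0
  have "opoly 0 A = (\<lambda>x. 0)" by (simp add: fun_eq_iff)
  then show ?case using cbounded_zero_op by simp
next
  case (pCons a p)
  have "cbounded (\<lambda>x. A (opoly p A x))" by (rule cbounded_comp[OF pCons.prems pCons.IH[OF pCons.prems]])
  moreover have "cbounded (\<lambda>x. a *\<^sub>R x)" using cbounded_scaleR_op[OF cbounded_id, of a] by simp
  ultimately have "cbounded (\<lambda>x. a *\<^sub>R x + A (opoly p A x))"
    by (rule cbounded_plus[rotated])
  then show ?case by (simp add: opoly_pCons[OF pCons.prems] fun_eq_iff)
qed

lemma opoly_mult:
  assumes A: "cbounded A"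
  shows "opoly (p * q) A x = opoly p A (opoly q A x)"
proof (induction p arbitrary: x rule: pCons_induct)
  case 0 then show ?case by simp
next
  case (pCons a p)
  have "opoly (pCons a p * q) A x = opoly (smult a q + pCons 0 (p * q)) A x" by (simp only: mult_pCons_left)
  also have "\<dots> = a *\<^sub>R opoly q A x + A (opoly p A (opoly q A x))"
    by (simp add: opoly_add opoly_smult opoly_pCons[OF A] pCons.IH)
  also have "\<dots> = opoly (pCons a p) A (opoly q A x)" by (simp add: opoly_pCons[OF A])
  finally show ?case .
qed

lemma opoly_commute:
  assumes A: "cbounded A"
  shows "opoly p A (A x) = A (opoly p A x)"
proof -
  have "opoly (p * [:0,1:]) A x = opoly ([:0,1:] * p) A x" by (simp add: mult.commute)
  then show ?thesis by (simp only: opoly_mult[OF A] opoly_X[OF A])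
qed

lemma selfadjoint_opoly:
  assumes A: "cbounded A" and sa: "selfadjoint A"
  shows "selfadjoint (opoly p A)"
proof (induction p rule: pCons_induct)
  case 0 then show ?case by (simp add: selfadjoint_def)
next
  case (pCons a p)
  show ?case unfolding selfadjoint_def
  proof (intro allI)
    fix x y
    have "cinner (A (opoly p A x)) y = cinner x (opoly p A (A y))"
      using sa pCons.IH by (simp add: selfadjoint_def)
    also have "opoly p A (A y) = A (opoly p A y)" by (rule opoly_commute[OF A])
    finally show "cinner (opoly (pCons a p) A x) y = cinner x (opoly (pCons a p) A y)"
      by (simp add: opoly_pCons[OF A] cinner_add_left cinner_add_right cinner_scaleR_left
          cinner_scaleR_right)
  qed
qed

lemma positive_op_opoly_selfadjoint:
  "positive_op A \<Longrightarrow> cinner (opoly p A x) y = cinner x (opoly p A y)"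
  using selfadjoint_opoly[of A p] by (simp add: positive_op_def selfadjoint_def)

section \<open>Polynomials nonnegative on an interval\<close>

inductive_set interval_sos :: "real \<Rightarrow> real poly set" for c :: real where
  square: "q * q \<in> interval_sos c"
| lower: "[:0,1:] * (q * q) \<in> interval_sos c"
| upper: "[:c,-1:] * (q * q) \<in> interval_sos c"
| both: "[:0,1:] * [:c,-1:] * (q * q) \<in> interval_sos c"
| add: "p \<in> interval_sos c \<Longrightarrow> r \<in> interval_sos c \<Longrightarrow> p + r \<in> interval_sos c"

lemma interval_sos_mult_square: "p \<in> interval_sos c \<Longrightarrow> (q * q) * p \<in> interval_sos c"
proof (induction p rule: interval_sos.induct)
  case (square s)
  have "(q * q) * (s * s) = (q * s) * (q * s)" by (simp add: ac_simps)
  then show ?case using interval_sos.square by metis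
next
  case (lower s)
  have "(q * q) * ([:0,1:] * (s * s)) = [:0,1:] * ((q * s) * (q * s))" by (simp only: ac_simps)
  then show ?case using interval_sos.lower by metis
next
  case (upper s)
  have "(q * q) * ([:c,-1:] * (s * s)) = [:c,-1:] * ((q * s) * (q * s))" by (simp only: ac_simps)
  then show ?case using interval_sos.upper by metis
next
  case (both s)
  have "(q * q) * ([:0,1:] * [:c,-1:] * (s * s)) = [:0,1:] * [:c,-1:] * ((q * s) * (q * s))"
    by (simp only: ac_simps)
  then show ?case using interval_sos.both by metis
next
  case (add p r)
  then show ?case by (metis distrib_left interval_sos.add)
qed

lemma interval_sos_mult_X: "p \<in> interval_sos c \<Longrightarrow> [:0,1:] * p \<in> interval_sos c"
proof (induction p rule: interval_sos.induct)
  case (square s) then show ?case using interval_sos.lower by metis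
next
  case (lower s)
  have "[:0,1:] * ([:0,1:] * (s * s)) = ([:0,1:] * s) * ([:0,1:] * s)" by (simp only: ac_simps)
  then show ?case using interval_sos.square by metis
next
  case (upper s)
  have "[:0,1:] * ([:c,-1:] * (s * s)) = [:0,1:] * [:c,-1:] * (s * s)" by (simp only: ac_simps)
  then show ?case using interval_sos.both by metis
next
  case (both s)
  have "[:0,1:] * ([:0,1:] * [:c,-1:] * (s * s)) = [:c,-1:] * (([:0,1:] * s) * ([:0,1:] * s))"
    by (simp only: ac_simps)
  then show ?case using interval_sos.upper by metis
next
  case (add p r)
  then show ?case by (metis distrib_left interval_sos.add)
qed

lemma interval_sos_mult_const_minus_X: "p \<in> interval_sos c \<Longrightarrow> [:c,-1:] * p \<in> interval_sos c"
proof (induction p rule: interval_sos.induct)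
  case (square s) then show ?case using interval_sos.upper by metis
next
  case (lower s)
  have "[:c,-1:] * ([:0,1:] * (s * s)) = [:0,1:] * [:c,-1:] * (s * s)" by (simp only: ac_simps)
  then show ?case using interval_sos.both by metis
next
  case (upper s)
  have "[:c,-1:] * ([:c,-1:] * (s * s)) = ([:c,-1:] * s) * ([:c,-1:] * s)" by (simp only: ac_simps)
  then show ?case using interval_sos.square by metis
next
  case (both s)
  have "[:c,-1:] * ([:0,1:] * [:c,-1:] * (s * s)) = [:0,1:] * (([:c,-1:] * s) * ([:c,-1:] * s))"
    by (simp only: ac_simps)
  then show ?case using interval_sos.lower by metis
next
  case (add p r)
  then show ?case by (metis distrib_left interval_sos.add)
qed

lemma interval_sos_mult:
  assumes "p \<in> interval_sos c" and r: "r \<in> interval_sos c"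
  shows "p * r \<in> interval_sos c"
  using assms(1)
proof (induction p rule: interval_sos.induct)
  case (square q) then show ?case using interval_sos_mult_square[OF r] by simp
next
  case (lower q)
  show ?case using interval_sos_mult_X[OF interval_sos_mult_square[OF r], of q] by (simp only: mult.assoc)
next
  case (upper q)
  show ?case using interval_sos_mult_const_minus_X[OF interval_sos_mult_square[OF r], of q] by (simp only: mult.assoc)
next
  case (both q)
  show ?case
    using interval_sos_mult_X[OF interval_sos_mult_const_minus_X[OF interval_sos_mult_square[OF r]], of q]
    by (simp only: mult.assoc)
next
  case (add p1 p2)
  then show ?case by (simp add: distrib_right interval_sos.add)
qed

lemma interval_sos_const: "0 \<le> a \<Longrightarrow> [:a:] \<in> interval_sos c"
  using interval_sos.square[where c=c and q="[:sqrt a:]"] by simp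

lemma interval_sos_linear_left: "r \<le> 0 \<Longrightarrow> [:-r,1:] \<in> interval_sos c"
  using interval_sos.add[OF interval_sos.lower[where c=c and q=1] interval_sos_const[of "-r"]] by simp

lemma interval_sos_linear_right: "c \<le> r \<Longrightarrow> [:r,-1:] \<in> interval_sos c"
  using interval_sos.add[OF interval_sos.upper[where c=c and q=1] interval_sos_const[of "r - c"]] by simp

lemma poly_nonneg_if_mult_nonneg:
  fixes m q :: "real poly"
  assumes mq: "\<And>t. t \<in> S \<Longrightarrow> 0 \<le> poly m t * poly q t" and m: "\<And>t. t \<in> S \<Longrightarrow> 0 < poly m t"
    and x: "x \<in> closure S"
  shows "0 \<le> poly q x"
proof (rule continuous_ge_on_closure[OF _ x])
  show "continuous_on (closure S) (poly q)" by (intro continuous_intros)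
  fix t assume "t \<in> S"
  then show "0 \<le> poly q t" using mq[of t] m[of t] by (simp add: zero_le_mult_iff)
qed

lemma nonneg_poly_factor_real_root:
  fixes p :: "real poly"
  assumes c: "0 < c" and p: "p \<noteq> 0" and root: "poly p r = 0"
    and nonneg: "\<And>t. t \<in> {0..c} \<Longrightarrow> 0 \<le> poly p t"
  obtains m q where "p = m * q" "m \<in> interval_sos c" "degree q < degree p"
    "\<And>t. t \<in> {0..c} \<Longrightarrow> 0 \<le> poly q t"
proof -
  obtain q where pq: "p = [:-r,1:] * q" using root poly_eq_0_iff_dvd by (metis dvdE)
  have q: "q \<noteq> 0" using pq p by auto
  have "degree p = degree [:-r,1:] + degree q" unfolding pq using q by (intro degree_mult_eq) auto
  then have dq: "degree q < degree p" by simp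
  have pq': "p = [:r,-1:] * (-q)" using pq by simp
  consider "r \<le> 0" | "c \<le> r" | "0 < r" "r < c" by linarith
  then show ?thesis
  proof cases
    case 1
    have "0 \<le> poly q t" if "t \<in> {0..c}" for t
      by (rule poly_nonneg_if_mult_nonneg[of "{0<..c}" "[:-r,1:]"])
        (use that c 1 nonneg in \<open>auto simp: pq algebra_simps\<close>)
    then show ?thesis using that[OF pq interval_sos_linear_left[OF 1] dq] by blast
  next
    case 2
    have "0 \<le> poly (-q) t" if "t \<in> {0..c}" for t
      by (rule poly_nonneg_if_mult_nonneg[of "{0..<c}" "[:r,-1:]"])
        (use that c 2 nonneg in \<open>auto simp: pq' algebra_simps\<close>)
    then show ?thesis using that[OF pq' interval_sos_linear_right[OF 2]] dq by simp
  next
    case 3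
    have "0 \<le> poly q r"
      by (rule poly_nonneg_if_mult_nonneg[of "{r<..c}" "[:-r,1:]"]) (use 3 nonneg in \<open>auto simp: pq algebra_simps\<close>)
    moreover have "0 \<le> poly (-q) r"
      by (rule poly_nonneg_if_mult_nonneg[of "{0..<r}" "[:r,-1:]"]) (use 3 nonneg in \<open>auto simp: pq' algebra_simps\<close>)
    ultimately have "poly q r = 0" by simp
    then obtain q2 where qq: "q = [:-r,1:] * q2" using poly_eq_0_iff_dvd by (metis dvdE)
    have "q2 \<noteq> 0" using qq q by auto
    then have "degree q = degree [:-r,1:] + degree q2" unfolding qq by (intro degree_mult_eq) auto
    then have dq2: "degree q2 < degree p" using dq by simp
    have pq2: "p = ([:-r,1:] * [:-r,1:]) * q2" using pq qq by (simp only: mult.assoc)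
    have "0 \<le> poly q2 t" if "t \<in> {0..c}" for t
    proof (rule poly_nonneg_if_mult_nonneg[of "{0..<r} \<union> {r<..c}" "[:-r,1:] * [:-r,1:]"])
      show "t \<in> closure ({0..<r} \<union> {r<..c})" using that 3 by auto
      fix s assume "s \<in> {0..<r} \<union> {r<..c}"
      then have "s \<in> {0..c}" "s - r \<noteq> 0" using 3 by auto
      then show "0 \<le> poly ([:-r,1:] * [:-r,1:]) s * poly q2 s" "0 < poly ([:-r,1:] * [:-r,1:]) s"
        using nonneg[of s] not_real_square_gt_zero[of "s - r"] by (simp_all add: pq2 algebra_simps)
    qed
    then show ?thesis using that[OF pq2 interval_sos.square dq2] by blast
  qed
qed

lemma poly_map_poly_of_real:
  "poly (map_poly complex_of_real p) (complex_of_real x) = complex_of_real (poly p x)"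
  by (induction p) (auto simp: map_poly_pCons)

lemma map_poly_of_real_add:
  "map_poly complex_of_real (p + q) = map_poly complex_of_real p + map_poly complex_of_real q"
  by (simp add: poly_eq_iff coeff_map_poly)

lemma poly_map_poly_of_real_mult:
  "poly (map_poly complex_of_real (p * q)) z
   = poly (map_poly complex_of_real p) z * poly (map_poly complex_of_real q) z"
proof (induction p)
  case (pCons a p)
  have "map_poly complex_of_real (smult a q)
      = smult (complex_of_real a) (map_poly complex_of_real q)"
    by (simp add: poly_eq_iff coeff_map_poly)
  then show ?case using pCons.IH by (simp add: map_poly_of_real_add map_poly_pCons algebra_simps)
qed simp

lemma degree_le_1_cases:
  assumes "degree (r::real poly) \<le> 1"
  obtains a b where "r = [:a, b:]"
proof -
  obtain a r1 where r: "r = pCons a r1" by (rule pCons_cases)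
  obtain b r2 where r1: "r1 = pCons b r2" by (rule pCons_cases)
  have "r2 = 0"
  proof (rule ccontr)
    assume "r2 \<noteq> 0"
    then have "degree r = Suc (Suc (degree r2))" by (simp add: r r1)
    then show False using assms by simp
  qed
  then show ?thesis using that r r1 by simp
qed

lemma cmod_mult_self: "cmod z * cmod z = Re z * Re z + Im z * Im z"
  using cmod_power2[of z] by (simp add: power2_eq_square)

text \<open>The real quadratic (t - z)(t - cnj z) divides p; its remainder is a real polynomial
  of degree at most 1 vanishing at the non-real point z.\<close>
lemma nonneg_poly_factor_complex_root:
  fixes p :: "real poly"
  assumes p: "p \<noteq> 0" and root: "poly (map_poly complex_of_real p) z = 0" and z: "Im z \<noteq> 0"
    and nonneg: "\<And>t. t \<in> {0..c} \<Longrightarrow> 0 \<le> poly p t"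
  obtains m q where "p = m * q" "m \<in> interval_sos c" "degree q < degree p"
    "\<And>t. t \<in> {0..c} \<Longrightarrow> 0 \<le> poly q t"
proof -
  define Q where "Q = [:-Re z,1:] * [:-Re z,1:] + [:Im z:] * [:Im z:]"
  have Q_eq: "Q = [:(cmod z)^2, -2 * Re z, 1:]"
    by (simp add: Q_def cmod_mult_self power2_eq_square)
  have Q_sos: "Q \<in> interval_sos c" unfolding Q_def by (intro interval_sos.add interval_sos.square)
  have Q_pos: "0 < poly Q t" for t
  proof -
    have "poly Q t = (t - Re z)^2 + (Im z)^2" by (simp add: Q_def power2_eq_square algebra_simps)
    then show ?thesis using z by (simp add: add_nonneg_pos)
  qed
  have dQ: "degree Q = 2" by (simp add: Q_eq)
  have QZ: "poly (map_poly complex_of_real Q) z = 0"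
    by (simp add: Q_eq map_poly_pCons complex_eq_iff cmod_mult_self power2_eq_square algebra_simps)
  have "degree (p mod Q) \<le> 1"
    using degree_mod_less[of Q p] dQ by (auto simp: Q_eq)
  then obtain a b where ab: "p mod Q = [:a, b:]" by (rule degree_le_1_cases)
  have split: "map_poly complex_of_real p
      = map_poly complex_of_real (Q * (p div Q)) + map_poly complex_of_real (p mod Q)"
    by (simp only: map_poly_of_real_add[symmetric] mult_div_mod_eq)
  have "0 = poly (map_poly complex_of_real p) z" using root by simp
  also have "\<dots> = poly (map_poly complex_of_real Q) z * poly (map_poly complex_of_real (p div Q)) z
      + poly (map_poly complex_of_real (p mod Q)) z"
    by (simp only: split poly_add poly_map_poly_of_real_mult)
  finally have "poly (map_poly complex_of_real (p mod Q)) z = 0" using QZ by simp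
  then have "complex_of_real a + z * complex_of_real b = 0" by (simp add: ab map_poly_pCons)
  then have "a = 0" "b = 0" using z by (auto simp: complex_eq_iff)
  then have "p mod Q = 0" using ab by simp
  then have pQ: "p = Q * (p div Q)" using mult_div_mod_eq[of Q p] by simp
  have "p div Q \<noteq> 0" "Q \<noteq> 0" using pQ p by auto
  then have "degree (Q * (p div Q)) = degree Q + degree (p div Q)" by (rule degree_mult_eq[rotated])
  then have "degree (p div Q) < degree p" using dQ pQ by simp
  moreover have "0 \<le> poly (p div Q) t" if "t \<in> {0..c}" for t
    using nonneg[OF that] Q_pos[of t] by (subst (asm) pQ) (simp add: zero_le_mult_iff)
  ultimately show ?thesis using pQ Q_sos by (intro that) auto
qed

theorem nonneg_poly_in_interval_sos:
  fixes p :: "real poly"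
  assumes c: "0 < c" and nonneg: "\<And>t. t \<in> {0..c} \<Longrightarrow> 0 \<le> poly p t"
  shows "p \<in> interval_sos c"
  using nonneg
proof (induction "degree p" arbitrary: p rule: less_induct)
  case (less p)
  show ?case
  proof (cases "degree p = 0")
    case True
    then obtain a where p: "p = [:a:]" by (metis degree_eq_zeroE)
    then show ?thesis using less.prems[of 0] c by (simp add: interval_sos_const)
  next
    case False
    then have "\<not> constant (poly (map_poly complex_of_real p))"
      by (simp add: constant_degree degree_map_poly)
    then obtain z where z: "poly (map_poly complex_of_real p) z = 0"
      using fundamental_theorem_of_algebra by blast
    have p: "p \<noteq> 0" using False by auto
    obtain m q where "p = m * q" "m \<in> interval_sos c" "degree q < degree p"
      "\<And>t. t \<in> {0..c} \<Longrightarrow> 0 \<le> poly q t"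
    proof (cases "Im z = 0")
      case True
      then have "poly p (Re z) = 0"
        using z poly_map_poly_of_real[of p "Re z"] by (simp add: complex_is_Real_iff)
      then show thesis using that nonneg_poly_factor_real_root[OF c p _ less.prems] by blast
    next
      case False
      then show thesis using that nonneg_poly_factor_complex_root[OF p z _ less.prems] by blast
    qed
    then show ?thesis using less.hyps interval_sos_mult by simp
  qed
qed

lemma cinner_opoly_mult_square:
  assumes A: "positive_op A"
  shows "cinner (opoly (m * (q * q)) A x) x = cinner (opoly m A (opoly q A x)) (opoly q A x)"
proof -
  have "m * (q * q) = q * (m * q)" by (simp add: ac_simps)
  then have "opoly (m * (q * q)) A x = opoly q A (opoly m A (opoly q A x))"
    by (simp only: opoly_mult[OF positive_op_cbounded[OF A]])
  then show ?thesis by (simp add: positive_op_opoly_selfadjoint[OF A])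
qed

lemma opoly_const_minus_X: "cbounded A \<Longrightarrow> opoly [:c,-1:] A y = c *\<^sub>R y - A y"
  by (simp add: opoly_pCons opoly_const cbounded_scaleR cbounded_minus)

lemma opoly_interval_sos_nonneg:
  assumes A: "positive_op A" and c: "onorm A \<le> c" and p: "p \<in> interval_sos c"
  shows "0 \<le> Re (cinner (opoly p A x) x)"
proof -
  have cb: "cbounded A" by (rule positive_op_cbounded[OF A])
  show ?thesis
    using p
  proof (induction p arbitrary: x rule: interval_sos.induct)
    case (square q)
    show ?case using cinner_opoly_mult_square[OF A, of 1 q x] by (simp add: opoly_one Re_cinner_self)
  next
    case (lower q)
    show ?case using cinner_opoly_mult_square[OF A, of "[:0,1:]" q x]
      by (simp add: opoly_X[OF cb] positive_op_nonneg[OF A])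
  next
    case (upper q)
    define y where "y = opoly q A x"
    have "Re (cinner (opoly ([:c,-1:] * (q * q)) A x) x) = c * (norm y)^2 - Re (cinner (A y) y)"
      using cinner_opoly_mult_square[OF A, of "[:c,-1:]" q x]
      by (simp add: y_def opoly_const_minus_X[OF cb] cinner_diff_left cinner_scaleR_left Re_cinner_self)
    moreover have "Re (cinner (A y) y) \<le> c * (norm y)^2"
      using Re_cinner_le_onorm[OF cb, of y] mult_right_mono[OF c, of "(norm y)^2"] by simp
    ultimately show ?case by simp
  next
    case (both q)
    define y where "y = opoly q A x"
    have "cinner (opoly ([:0,1:] * [:c,-1:] * (q * q)) A x) x = cinner (opoly ([:0,1:] * [:c,-1:]) A y) y"
      unfolding y_def by (rule cinner_opoly_mult_square[OF A])
    also have "opoly ([:0,1:] * [:c,-1:]) A y = c *\<^sub>R A y - A (A y)"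
      by (simp only: opoly_mult[OF cb] opoly_X[OF cb] opoly_const_minus_X[OF cb] cbounded_diff[OF cb]
          cbounded_scaleR[OF cb])
    finally have "Re (cinner (opoly ([:0,1:] * [:c,-1:] * (q * q)) A x) x) = c * Re (cinner (A y) y) - (norm (A y))^2"
      by (simp add: cinner_diff_left cinner_scaleR_left positive_op_selfadjoint[OF A, of "A y" y]
          Re_cinner_self)
    moreover have "(norm (A y))^2 \<le> c * Re (cinner (A y) y)" by (rule positive_op_power2_norm_le[OF A c])
    ultimately show ?case by simp
  next
    case (add p r)
    then show ?case by (simp add: opoly_add cinner_add_left)
  qed
qed

lemma opoly_zero_op:
  assumes A: "cbounded A" and A0: "\<And>x. A x = 0"
  shows "opoly p A x = poly p 0 *\<^sub>R x"
proof (induction p)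
  case (pCons a p)
  have "opoly (pCons a p) A x = a *\<^sub>R x + A (opoly p A x)" by (rule opoly_pCons[OF A])
  also have "A (opoly p A x) = 0" by (rule A0)
  finally show ?case by simp
qed simp

lemma opoly_nonneg:
  assumes A: "positive_op A" and nonneg: "\<And>t. t \<in> {0..onorm A} \<Longrightarrow> 0 \<le> poly p t"
  shows "0 \<le> Re (cinner (opoly p A x) x)"
proof (cases "onorm A = 0")
  case True
  have cb: "cbounded A" by (rule positive_op_cbounded[OF A])
  then have "A y = 0" for y using cbounded_onorm[OF cb, of y] True by simp
  then show ?thesis using nonneg[of 0] True
    by (simp add: opoly_zero_op[OF cb] cinner_scaleR_left Re_cinner_self)
next
  case False
  then have "0 < onorm A" using positive_op_onorm_nonneg[OF A] by simp
  then have "p \<in> interval_sos (onorm A)" using nonneg by (rule nonneg_poly_in_interval_sos)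
  then show ?thesis by (rule opoly_interval_sos_nonneg[OF A order_refl])
qed

lemma norm_opoly_le:
  assumes A: "positive_op A" and bound: "\<And>t. t \<in> {0..onorm A} \<Longrightarrow> \<bar>poly p t\<bar> \<le> M"
  shows "norm (opoly p A x) \<le> M * norm x"
proof -
  have cb: "cbounded A" by (rule positive_op_cbounded[OF A])
  have M: "0 \<le> M" using bound[of 0] positive_op_onorm_nonneg[OF A] by force
  have "0 \<le> Re (cinner (opoly ([:M^2:] - p * p) A x) x)"
  proof (rule opoly_nonneg[OF A])
    fix t assume "t \<in> {0..onorm A}"
    then have "(poly p t)^2 \<le> M^2" using bound abs_le_square_iff M by (metis abs_of_nonneg)
    then show "0 \<le> poly ([:M^2:] - p * p) t" by (simp add: power2_eq_square)
  qed
  also have "cinner (opoly ([:M^2:] - p * p) A x) x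
      = complex_of_real (M^2) * cinner x x - cinner (opoly p A x) (opoly p A x)"
    by (simp add: opoly_diff opoly_const opoly_mult[OF cb] cinner_diff_left cinner_scaleR_left
        positive_op_opoly_selfadjoint[OF A, of p "opoly p A x"])
  finally have "(norm (opoly p A x))^2 \<le> (M * norm x)^2"
    by (simp add: Re_cinner_self power_mult_distrib)
  then show ?thesis by (rule power2_le_imp_le) (use M in simp)
qed

lemma norm_opoly_diff_le:
  assumes A: "positive_op A" and bound: "\<And>t. t \<in> {0..onorm A} \<Longrightarrow> \<bar>poly p t - poly q t\<bar> \<le> M"
  shows "norm (opoly p A x - opoly q A x) \<le> M * norm x"
  using norm_opoly_le[OF A, of "p - q" M x] bound by (simp add: opoly_diff)

section \<open>The continuous functional calculus\<close>

lemma poly_approx_seq: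
  fixes f :: "real \<Rightarrow> real"
  assumes f: "continuous_on {a..b} f"
  obtains ps where "\<And>n t. t \<in> {a..b} \<Longrightarrow> \<bar>poly (ps n) t - f t\<bar> \<le> 1 / (real n + 1)"
proof -
  have "\<exists>p. \<forall>t\<in>{a..b}. \<bar>poly p t - f t\<bar> \<le> 1 / (real n + 1)" for n
  proof -
    obtain g where g: "real_polynomial_function g"
      and approx: "\<And>t. t \<in> {a..b} \<Longrightarrow> \<bar>f t - g t\<bar> < 1 / (real n + 1)"
      using Stone_Weierstrass_real_polynomial_function[OF compact_Icc f, of "1 / (real n + 1)"] by auto
    obtain c k where "g = (\<lambda>x. \<Sum>i\<le>k. c i * x^i)" using g real_polynomial_function_iff_sum by blast
    then have "poly (\<Sum>i\<le>k. monom (c i) i) t = g t" for t by (simp add: poly_sum poly_monom)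
    then have "\<bar>poly (\<Sum>i\<le>k. monom (c i) i) t - f t\<bar> \<le> 1 / (real n + 1)" if "t \<in> {a..b}" for t
      using approx[OF that] by (simp add: abs_minus_commute)
    then show ?thesis by blast
  qed
  then show ?thesis using that by metis
qed

lemma uniform_limit_if_bound:
  fixes ps :: "nat \<Rightarrow> real poly" and f :: "real \<Rightarrow> real"
  assumes "\<And>n t. t \<in> S \<Longrightarrow> \<bar>poly (ps n) t - f t\<bar> \<le> e n" "e \<longlonglongrightarrow> 0"
  shows "uniform_limit S (\<lambda>n t. poly (ps n) t) f sequentially"
  unfolding uniform_limit_iff
proof (intro allI impI)
  fix \<epsilon> :: real assume "0 < \<epsilon>"
  then have "\<forall>\<^sub>F n in sequentially. \<bar>e n\<bar> < \<epsilon>" using assms(2) by (simp add: tendsto_iff dist_real_def)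
  then show "\<forall>\<^sub>F n in sequentially. \<forall>t\<in>S. dist (poly (ps n) t) (f t) < \<epsilon>"
  proof eventually_elim
    case (elim n)
    show ?case using assms(1)[of _ n] elim by (force simp: dist_real_def)
  qed
qed

lemma uniformly_Cauchy_pointwise_limit:
  fixes T :: "nat \<Rightarrow> 'a::real_normed_vector \<Rightarrow> 'b::{real_normed_vector,complete_space}"
  assumes Cauchy: "\<And>m n x. norm (T m x - T n x) \<le> (e m + e n) * norm x" and e: "e \<longlonglongrightarrow> 0"
  obtains B where "\<And>x. (\<lambda>n. T n x) \<longlonglongrightarrow> B x" "\<And>n x. norm (T n x - B x) \<le> e n * norm x"
proof
  fix x
  have "Cauchy (\<lambda>n. T n x)"
  proof (rule Cauchy_if_dist_le_add)
    show "dist (T m x) (T n x) \<le> e m * norm x + e n * norm x" for m n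
      using Cauchy[where m=m and n=n and x=x] by (simp add: dist_norm algebra_simps)
    show "(\<lambda>n. e n * norm x) \<longlonglongrightarrow> 0" using tendsto_mult_left_zero[OF e] by simp
  qed
  then show lim: "(\<lambda>n. T n x) \<longlonglongrightarrow> lim (\<lambda>n. T n x)"
    by (simp add: Cauchy_convergent_iff convergent_LIMSEQ_iff)
  fix n
  show "norm (T n x - lim (\<lambda>n. T n x)) \<le> e n * norm x"
  proof (rule tendsto_le[OF sequentially_bot])
    show "(\<lambda>m. (e n + e m) * norm x) \<longlonglongrightarrow> e n * norm x"
      using tendsto_mult[OF tendsto_add[OF tendsto_const e] tendsto_const, of "e n" "norm x"] by simp
    show "(\<lambda>m. norm (T n x - T m x)) \<longlonglongrightarrow> norm (T n x - lim (\<lambda>n. T n x))"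
      by (intro tendsto_intros lim)
    show "\<forall>\<^sub>F m in sequentially. norm (T n x - T m x) \<le> (e n + e m) * norm x"
      using Cauchy by simp
  qed
qed

lemma cbounded_pointwise_limit:
  assumes T: "\<And>n. cbounded (T n)" and lim: "\<And>x. (\<lambda>n. T n x) \<longlonglongrightarrow> B x"
    and err: "\<And>x. norm (T 0 x - B x) \<le> K * norm x"
  shows "cbounded B"
proof (rule cboundedI[where K="onorm (T 0) + K"])
  fix x y
  have "(\<lambda>n. T n (x + y)) \<longlonglongrightarrow> B x + B y"
    using tendsto_add[OF lim[of x] lim[of y]] by (simp add: cbounded_add[OF T])
  then show "B (x + y) = B x + B y" using lim[of "x + y"] LIMSEQ_unique by blast
next
  fix c x
  have "(\<lambda>n. T n (scaleC c x)) \<longlonglongrightarrow> scaleC c (B x)"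
    using bounded_linear.tendsto[OF bounded_linear_scaleC lim[of x], of c]
    by (simp add: cbounded_scaleC[OF T])
  then show "B (scaleC c x) = scaleC c (B x)" using lim[of "scaleC c x"] LIMSEQ_unique by blast
next
  fix x
  have "norm (B x) \<le> norm (T 0 x) + norm (T 0 x - B x)"
    using norm_triangle_sub[of "B x" "T 0 x"] by (simp add: norm_minus_commute)
  then show "norm (B x) \<le> norm x * (onorm (T 0) + K)"
    using cbounded_onorm[OF T[of 0], of x] err[of x] by (simp add: algebra_simps)
qed

definition is_fcalc :: "(real \<Rightarrow> real) \<Rightarrow> ('a::complex_inner \<Rightarrow> 'a) \<Rightarrow> ('a \<Rightarrow> 'a) \<Rightarrow> bool" where
  "is_fcalc f A B \<longleftrightarrow> cbounded B \<and>
     (\<forall>ps. uniform_limit {0..onorm A} (\<lambda>n t. poly (ps n) t) f sequentially \<longrightarrow>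
        (\<lambda>n. onorm (\<lambda>x. opoly (ps n) A x - B x)) \<longlonglongrightarrow> 0)"

lemma fcalc_eq_The: "fcalc f A = (THE B. is_fcalc f A B)"
  by (simp add: fcalc_def is_fcalc_def)

lemma onorm_opoly_diff_tendsto_0:
  assumes A: "positive_op A" and B: "cbounded B" and e: "e \<longlonglongrightarrow> 0"
    and ps0: "\<And>n t. t \<in> {0..onorm A} \<Longrightarrow> \<bar>poly (ps0 n) t - f t\<bar> \<le> e n"
    and err: "\<And>n x. norm (opoly (ps0 n) A x - B x) \<le> e n * norm x"
    and ps: "uniform_limit {0..onorm A} (\<lambda>n t. poly (ps n) t) f sequentially"
  shows "(\<lambda>n. onorm (\<lambda>x. opoly (ps n) A x - B x)) \<longlonglongrightarrow> 0"
  unfolding tendsto_iff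
proof (intro allI impI)
  fix \<epsilon> :: real assume \<epsilon>: "0 < \<epsilon>"
  have "\<forall>\<^sub>F n in sequentially. \<forall>t\<in>{0..onorm A}. dist (poly (ps n) t) (f t) < \<epsilon> / 4"
    using ps[unfolded uniform_limit_iff, rule_format, of "\<epsilon> / 4"] \<epsilon> by simp
  moreover have "\<forall>\<^sub>F n in sequentially. dist (e n) 0 < \<epsilon> / 4"
    using e[unfolded tendsto_iff, rule_format, of "\<epsilon> / 4"] \<epsilon> by simp
  ultimately show "\<forall>\<^sub>F n in sequentially. dist (onorm (\<lambda>x. opoly (ps n) A x - B x)) 0 < \<epsilon>"
  proof eventually_elim
    case (elim n)
    have diff: "cbounded (\<lambda>x. opoly (ps n) A x - B x)"
      by (rule cbounded_diff_op[OF opoly_cbounded[OF positive_op_cbounded[OF A]] B])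
    have "onorm (\<lambda>x. opoly (ps n) A x - B x) \<le> 3 * \<epsilon> / 4"
    proof (rule onorm_bound)
      fix x
      have "norm (opoly (ps n) A x - opoly (ps0 n) A x) \<le> (\<epsilon> / 2) * norm x"
      proof (rule norm_opoly_diff_le[OF A])
        fix t assume t: "t \<in> {0..onorm A}"
        have "\<bar>poly (ps n) t - f t\<bar> < \<epsilon> / 4" using elim(1) t by (simp add: dist_real_def)
        moreover have "\<bar>e n\<bar> < \<epsilon> / 4" using elim(2) by simp
        ultimately show "\<bar>poly (ps n) t - poly (ps0 n) t\<bar> \<le> \<epsilon> / 2"
          using ps0[OF t, of n] by linarith
      qed
      moreover have "norm (opoly (ps0 n) A x - B x) \<le> (\<epsilon> / 4) * norm x"
      proof -
        have "e n * norm x \<le> (\<epsilon> / 4) * norm x"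
          using elim(2) by (intro mult_right_mono) (simp_all add: dist_real_def)
        then show ?thesis using err[of n x] by linarith
      qed
      ultimately have "norm (opoly (ps n) A x - B x) \<le> (\<epsilon> / 2) * norm x + (\<epsilon> / 4) * norm x"
        by (rule norm_diff_triangle_le)
      then show "norm (opoly (ps n) A x - B x) \<le> 3 * \<epsilon> / 4 * norm x"
        by (simp add: algebra_simps)
    qed (use \<epsilon> in simp)
    then show ?case using \<epsilon> cbounded_onorm_nonneg[OF diff] by (simp add: dist_real_def)
  qed
qed

lemma is_fcalc_exists:
  fixes A :: "'a::{complex_inner,complete_space} \<Rightarrow> 'a"
  assumes A: "positive_op A" and f: "continuous_on {0..onorm A} f"
  shows "\<exists>B. is_fcalc f A B"
proof -
  obtain ps0 where ps0: "\<And>n t. t \<in> {0..onorm A} \<Longrightarrow> \<bar>poly (ps0 n) t - f t\<bar> \<le> 1 / (real n + 1)"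
    using poly_approx_seq[OF f] by blast
  have "norm (opoly (ps0 m) A x - opoly (ps0 n) A x) \<le> (1 / (real m + 1) + 1 / (real n + 1)) * norm x"
    for m n x
  proof (rule norm_opoly_diff_le[OF A])
    fix t assume "t \<in> {0..onorm A}"
    then show "\<bar>poly (ps0 m) t - poly (ps0 n) t\<bar> \<le> 1 / (real m + 1) + 1 / (real n + 1)"
      using ps0[of t m] ps0[of t n] by linarith
  qed
  from uniformly_Cauchy_pointwise_limit[OF this inv_Suc_tendsto]
  obtain B where lim: "\<And>x. (\<lambda>n. opoly (ps0 n) A x) \<longlonglongrightarrow> B x"
    and err: "\<And>n x. norm (opoly (ps0 n) A x - B x) \<le> 1 / (real n + 1) * norm x"
    by blast
  have "cbounded B"
    by (rule cbounded_pointwise_limit[OF opoly_cbounded[OF positive_op_cbounded[OF A]] lim, of 1])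
      (use err[of 0] in simp)
  then have "is_fcalc f A B"
    unfolding is_fcalc_def using onorm_opoly_diff_tendsto_0[OF A _ inv_Suc_tendsto ps0 err] by blast
  then show ?thesis by blast
qed

lemma is_fcalc_unique:
  assumes A: "cbounded A" and f: "continuous_on {0..onorm A} f"
    and B: "is_fcalc f A B" and B': "is_fcalc f A B'"
  shows "B = B'"
proof
  fix x
  obtain ps where "\<And>n t. t \<in> {0..onorm A} \<Longrightarrow> \<bar>poly (ps n) t - f t\<bar> \<le> 1 / (real n + 1)"
    using poly_approx_seq[OF f] by blast
  then have ps: "uniform_limit {0..onorm A} (\<lambda>n t. poly (ps n) t) f sequentially"
    by (rule uniform_limit_if_bound[OF _ inv_Suc_tendsto])
  define d where "d C n = onorm (\<lambda>x. opoly (ps n) A x - C x)" for C n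
  have bound: "norm (opoly (ps n) A x - C x) \<le> d C n * norm x" if "cbounded C" for C n
    unfolding d_def by (rule cbounded_onorm[OF cbounded_diff_op[OF opoly_cbounded[OF A] that]])
  have "norm (B x - B' x) \<le> 0"
  proof (rule tendsto_le[OF sequentially_bot])
    have "d B \<longlonglongrightarrow> 0" "d B' \<longlonglongrightarrow> 0" using B B' ps unfolding is_fcalc_def d_def by blast+
    then show "(\<lambda>n. (d B n + d B' n) * norm x) \<longlonglongrightarrow> 0"
      by (intro tendsto_mult_left_zero tendsto_add_zero)
    show "\<forall>\<^sub>F n in sequentially. norm (B x - B' x) \<le> (d B n + d B' n) * norm x"
    proof (intro always_eventually allI)
      fix n
      have "norm (B x - opoly (ps n) A x) \<le> d B n * norm x"
        using bound[of B n] B by (simp add: is_fcalc_def norm_minus_commute)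
      moreover have "norm (opoly (ps n) A x - B' x) \<le> d B' n * norm x"
        using bound[of B' n] B' by (simp add: is_fcalc_def)
      ultimately show "norm (B x - B' x) \<le> (d B n + d B' n) * norm x"
        unfolding distrib_right by (rule norm_diff_triangle_le)
    qed
  qed simp
  then show "B x = B' x" by simp
qed

lemma is_fcalc_fcalc:
  fixes A :: "'a::{complex_inner,complete_space} \<Rightarrow> 'a"
  assumes A: "positive_op A" and f: "continuous_on {0..onorm A} f"
  shows "is_fcalc f A (fcalc f A)"
proof -
  have "\<exists>!B. is_fcalc f A B"
    by (rule ex_ex1I[OF is_fcalc_exists[OF A f] is_fcalc_unique[OF positive_op_cbounded[OF A] f]])
  then show ?thesis unfolding fcalc_eq_The by (rule theI')
qed

lemma continuous_on_Icc_abs_bound: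
  fixes f :: "real \<Rightarrow> real"
  assumes "continuous_on {a..b} f"
  obtains M where "\<And>t. t \<in> {a..b} \<Longrightarrow> \<bar>f t\<bar> \<le> M"
proof -
  have "bounded (f ` {a..b})"
    by (rule compact_imp_bounded[OF compact_continuous_image[OF assms compact_Icc]])
  then obtain M where "\<forall>y\<in>f ` {a..b}. norm y \<le> M" using bounded_pos by blast
  then have "\<And>t. t \<in> {a..b} \<Longrightarrow> \<bar>f t\<bar> \<le> M" by auto
  then show ?thesis by (rule that)
qed

lemma tendsto_if_norm_diff_le:
  assumes "\<And>n. norm (X n - L) \<le> g n" "g \<longlonglongrightarrow> 0"
  shows "X \<longlonglongrightarrow> (L::'b::real_normed_vector)"
proof -
  have "(\<lambda>n. X n - L) \<longlonglongrightarrow> 0"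
    by (rule Lim_null_comparison[OF always_eventually assms(2)]) (use assms(1) in auto)
  then show ?thesis using Lim_null by blast
qed

lemma tendsto_apply_uniformly_bounded:
  fixes T :: "nat \<Rightarrow> 'a::real_normed_vector \<Rightarrow> 'b::real_normed_vector"
  assumes lim: "\<And>x. (\<lambda>n. T n x) \<longlonglongrightarrow> S x" and diff: "\<And>n x y. T n (x - y) = T n x - T n y"
    and bound: "\<And>n x. norm (T n x) \<le> M * norm x" and v: "v \<longlonglongrightarrow> w"
  shows "(\<lambda>n. T n (v n)) \<longlonglongrightarrow> S w"
proof (rule tendsto_if_norm_diff_le)
  fix n
  have "norm (T n (v n) - S w) = norm (T n (v n - w) + (T n w - S w))" by (simp add: diff)
  then show "norm (T n (v n) - S w) \<le> M * norm (v n - w) + norm (T n w - S w)"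
    using norm_triangle_ineq[of "T n (v n - w)" "T n w - S w"] bound[of n "v n - w"] by linarith
next
  show "(\<lambda>n. M * norm (v n - w) + norm (T n w - S w)) \<longlonglongrightarrow> 0"
    using Lim_null[THEN iffD1, OF v] Lim_null[THEN iffD1, OF lim[of w]]
    by (intro tendsto_add_zero tendsto_mult_right_zero tendsto_norm_zero)
qed

lemma abs_mult_diff_le:
  fixes p q f g :: real
  shows "\<bar>p * q - f * g\<bar> \<le> \<bar>p\<bar> * \<bar>q - g\<bar> + \<bar>g\<bar> * \<bar>p - f\<bar>"
proof -
  have "p * q - f * g = p * (q - g) + g * (p - f)" by (simp add: algebra_simps)
  then show ?thesis by (metis abs_mult abs_triangle_ineq)
qed

context
  fixes A :: "'a::{complex_inner,complete_space} \<Rightarrow> 'a"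
  assumes P: "positive_op A"
begin

lemma fcalc_cbounded: "continuous_on {0..onorm A} f \<Longrightarrow> cbounded (fcalc f A)"
  using is_fcalc_fcalc[OF P] by (simp add: is_fcalc_def)

lemma fcalc_tendsto:
  assumes f: "continuous_on {0..onorm A} f"
    and bd: "\<And>n t. t \<in> {0..onorm A} \<Longrightarrow> \<bar>poly (ps n) t - f t\<bar> \<le> e n" and e: "e \<longlonglongrightarrow> 0"
  shows "(\<lambda>n. opoly (ps n) A x) \<longlonglongrightarrow> fcalc f A x"
proof (rule tendsto_if_norm_diff_le)
  define d where "d n = onorm (\<lambda>x. opoly (ps n) A x - fcalc f A x)" for n
  show "norm (opoly (ps n) A x - fcalc f A x) \<le> d n * norm x" for n
    unfolding d_def
    by (rule cbounded_onorm[OF cbounded_diff_op[OF opoly_cbounded[OF positive_op_cbounded[OF P]]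
          fcalc_cbounded[OF f]]])
  have "uniform_limit {0..onorm A} (\<lambda>n t. poly (ps n) t) f sequentially"
    by (rule uniform_limit_if_bound[OF bd e])
  then have "d \<longlonglongrightarrow> 0" using is_fcalc_fcalc[OF P f] unfolding is_fcalc_def d_def by blast
  then show "(\<lambda>n. d n * norm x) \<longlonglongrightarrow> 0" by (rule tendsto_mult_left_zero)
qed

lemma fcalc_approx:
  assumes f: "continuous_on {0..onorm A} f"
  obtains ps where "\<And>n t. t \<in> {0..onorm A} \<Longrightarrow> \<bar>poly (ps n) t - f t\<bar> \<le> 1 / (real n + 1)"
    "\<And>x. (\<lambda>n. opoly (ps n) A x) \<longlonglongrightarrow> fcalc f A x"
proof -
  obtain ps where ps: "\<And>n t. t \<in> {0..onorm A} \<Longrightarrow> \<bar>poly (ps n) t - f t\<bar> \<le> 1 / (real n + 1)"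
    using poly_approx_seq[OF f] by blast
  show ?thesis by (rule that[OF ps fcalc_tendsto[OF f ps inv_Suc_tendsto]])
qed

lemma fcalc_poly: "fcalc (poly p) A x = opoly p A x"
proof -
  have "(\<lambda>n. opoly p A x) \<longlonglongrightarrow> fcalc (poly p) A x"
  proof (rule fcalc_tendsto[where ps="\<lambda>n. p" and e="\<lambda>n. 0"])
    show "continuous_on {0..onorm A} (poly p)"
      using continuous_on_poly[OF continuous_on_id, of _ p] by simp
  qed simp_all
  then have "opoly p A x = fcalc (poly p) A x" by (rule LIMSEQ_const_iff[THEN iffD1])
  then show ?thesis by simp
qed

lemma fcalc_cong:
  assumes f: "continuous_on {0..onorm A} f" and eq: "\<And>t. t \<in> {0..onorm A} \<Longrightarrow> f t = g t"
  shows "fcalc f A x = fcalc g A x"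
proof -
  have g: "continuous_on {0..onorm A} g" by (rule continuous_on_eq[OF f eq])
  obtain ps where ps: "\<And>n t. t \<in> {0..onorm A} \<Longrightarrow> \<bar>poly (ps n) t - f t\<bar> \<le> 1 / (real n + 1)"
    and l: "\<And>x. (\<lambda>n. opoly (ps n) A x) \<longlonglongrightarrow> fcalc f A x" using fcalc_approx[OF f] by blast
  have "(\<lambda>n. opoly (ps n) A x) \<longlonglongrightarrow> fcalc g A x"
  proof (rule fcalc_tendsto[OF g _ inv_Suc_tendsto])
    fix n t assume "t \<in> {0..onorm A}"
    then show "\<bar>poly (ps n) t - g t\<bar> \<le> 1 / (real n + 1)" using ps[of t n] eq[of t] by simp
  qed
  then show ?thesis using l[of x] LIMSEQ_unique by blast
qed

lemma fcalc_lincomb: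
  assumes f: "continuous_on {0..onorm A} f" and g: "continuous_on {0..onorm A} g"
  shows "fcalc (\<lambda>t. a * f t + b * g t) A x = a *\<^sub>R fcalc f A x + b *\<^sub>R fcalc g A x"
proof -
  obtain ps where ps: "\<And>n t. t \<in> {0..onorm A} \<Longrightarrow> \<bar>poly (ps n) t - f t\<bar> \<le> 1 / (real n + 1)"
    and l1: "\<And>x. (\<lambda>n. opoly (ps n) A x) \<longlonglongrightarrow> fcalc f A x" using fcalc_approx[OF f] by blast
  obtain qs where qs: "\<And>n t. t \<in> {0..onorm A} \<Longrightarrow> \<bar>poly (qs n) t - g t\<bar> \<le> 1 / (real n + 1)"
    and l2: "\<And>x. (\<lambda>n. opoly (qs n) A x) \<longlonglongrightarrow> fcalc g A x" using fcalc_approx[OF g] by blast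
  have h: "continuous_on {0..onorm A} (\<lambda>t. a * f t + b * g t)"
    using f g by (intro continuous_intros)
  have "(\<lambda>n. opoly (smult a (ps n) + smult b (qs n)) A x) \<longlonglongrightarrow> fcalc (\<lambda>t. a * f t + b * g t) A x"
  proof (rule fcalc_tendsto[OF h _ tendsto_mult_right_zero[OF inv_Suc_tendsto, of "\<bar>a\<bar> + \<bar>b\<bar>"]])
    fix n t assume t: "t \<in> {0..onorm A}"
    have "\<bar>poly (smult a (ps n) + smult b (qs n)) t - (a * f t + b * g t)\<bar>
        = \<bar>a * (poly (ps n) t - f t) + b * (poly (qs n) t - g t)\<bar>" by (simp add: algebra_simps)
    also have "\<dots> \<le> \<bar>a\<bar> * \<bar>poly (ps n) t - f t\<bar> + \<bar>b\<bar> * \<bar>poly (qs n) t - g t\<bar>"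
      using abs_triangle_ineq[of "a * (poly (ps n) t - f t)" "b * (poly (qs n) t - g t)"] by (simp add: abs_mult)
    also have "\<dots> \<le> \<bar>a\<bar> * (1 / (real n + 1)) + \<bar>b\<bar> * (1 / (real n + 1))"
      using ps[OF t, of n] qs[OF t, of n] by (intro add_mono mult_left_mono) auto
    also have "\<dots> = (\<bar>a\<bar> + \<bar>b\<bar>) * (1 / (real n + 1))" by (rule distrib_right[symmetric])
    finally show "\<bar>poly (smult a (ps n) + smult b (qs n)) t - (a * f t + b * g t)\<bar> \<le> (\<bar>a\<bar> + \<bar>b\<bar>) * (1 / (real n + 1))" .
  qed
  moreover have "(\<lambda>n. opoly (smult a (ps n) + smult b (qs n)) A x) \<longlonglongrightarrow> a *\<^sub>R fcalc f A x + b *\<^sub>R fcalc g A x"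
    using tendsto_add[OF tendsto_scaleR[OF tendsto_const l1] tendsto_scaleR[OF tendsto_const l2]]
    by (simp add: opoly_add opoly_smult)
  ultimately show ?thesis using LIMSEQ_unique by blast
qed

lemma fcalc_nonneg:
  assumes f: "continuous_on {0..onorm A} f" and nonneg: "\<And>t. t \<in> {0..onorm A} \<Longrightarrow> 0 \<le> f t"
  shows "0 \<le> Re (cinner (fcalc f A x) x)"
proof -
  obtain ps where ps: "\<And>n t. t \<in> {0..onorm A} \<Longrightarrow> \<bar>poly (ps n) t - f t\<bar> \<le> 1 / (real n + 1)"
    using poly_approx_seq[OF f] by blast
  define qs where "qs n = ps n + [:1 / (real n + 1):]" for n
  have "(\<lambda>n. opoly (qs n) A x) \<longlonglongrightarrow> fcalc f A x"
  proof (rule fcalc_tendsto[OF f _ tendsto_mult_right_zero[OF inv_Suc_tendsto, of 2]])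
    fix n t assume "t \<in> {0..onorm A}"
    then show "\<bar>poly (qs n) t - f t\<bar> \<le> 2 * (1 / (real n + 1))"
      using ps[of t n] by (simp add: qs_def abs_le_iff)
  qed
  then have "(\<lambda>n. Re (cinner (opoly (qs n) A x) x)) \<longlonglongrightarrow> Re (cinner (fcalc f A x) x)"
    by (intro tendsto_Re tendsto_cinner_left)
  moreover have "0 \<le> Re (cinner (opoly (qs n) A x) x)" for n
  proof (rule opoly_nonneg[OF P])
    fix t assume "t \<in> {0..onorm A}"
    then show "0 \<le> poly (qs n) t" using ps[of t n] nonneg[of t] by (simp add: qs_def abs_le_iff)
  qed
  ultimately show ?thesis by (intro LIMSEQ_le_const) auto
qed

lemma selfadjoint_fcalc:
  assumes f: "continuous_on {0..onorm A} f"
  shows "selfadjoint (fcalc f A)"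
  unfolding selfadjoint_def
proof (intro allI)
  fix x y
  obtain ps where "\<And>n t. t \<in> {0..onorm A} \<Longrightarrow> \<bar>poly (ps n) t - f t\<bar> \<le> 1 / (real n + 1)"
    and lim: "\<And>x. (\<lambda>n. opoly (ps n) A x) \<longlonglongrightarrow> fcalc f A x"
    using fcalc_approx[OF f] by blast
  have "(\<lambda>n. cinner (opoly (ps n) A x) y) \<longlonglongrightarrow> cinner (fcalc f A x) y"
    by (rule tendsto_cinner_left[OF lim])
  moreover have "(\<lambda>n. cinner (opoly (ps n) A x) y) \<longlonglongrightarrow> cinner x (fcalc f A y)"
    unfolding positive_op_opoly_selfadjoint[OF P] by (rule tendsto_cinner_right[OF lim])
  ultimately show "cinner (fcalc f A x) y = cinner x (fcalc f A y)" by (rule LIMSEQ_unique)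
qed

lemma positive_op_fcalc:
  assumes f: "continuous_on {0..onorm A} f" and nonneg: "\<And>t. t \<in> {0..onorm A} \<Longrightarrow> 0 \<le> f t"
  shows "positive_op (fcalc f A)"
  unfolding positive_op_def
  using fcalc_cbounded[OF f] selfadjoint_fcalc[OF f] fcalc_nonneg[OF f nonneg] by blast

lemma norm_fcalc_le:
  assumes f: "continuous_on {0..onorm A} f" and bound: "\<And>t. t \<in> {0..onorm A} \<Longrightarrow> \<bar>f t\<bar> \<le> M"
  shows "norm (fcalc f A x) \<le> M * norm x"
proof -
  obtain ps where ps: "\<And>n t. t \<in> {0..onorm A} \<Longrightarrow> \<bar>poly (ps n) t - f t\<bar> \<le> 1 / (real n + 1)"
    and lim: "\<And>x. (\<lambda>n. opoly (ps n) A x) \<longlonglongrightarrow> fcalc f A x"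
    using fcalc_approx[OF f] by blast
  have "norm (opoly (ps n) A x) \<le> (M + 1 / (real n + 1)) * norm x" for n
  proof (rule norm_opoly_le[OF P])
    fix t assume "t \<in> {0..onorm A}"
    then show "\<bar>poly (ps n) t\<bar> \<le> M + 1 / (real n + 1)" using ps[of t n] bound[of t] by linarith
  qed
  moreover have "(\<lambda>n. (M + 1 / (real n + 1)) * norm x) \<longlonglongrightarrow> M * norm x"
    using tendsto_mult[OF tendsto_add[OF tendsto_const inv_Suc_tendsto] tendsto_const, of M "norm x"]
    by simp
  ultimately show ?thesis
    using tendsto_le[OF sequentially_bot _ tendsto_norm[OF lim[of x]]] by (meson always_eventually)
qed

lemma fcalc_mult:
  assumes f: "continuous_on {0..onorm A} f" and g: "continuous_on {0..onorm A} g"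
  shows "fcalc (\<lambda>t. f t * g t) A x = fcalc f A (fcalc g A x)"
proof -
  have A: "cbounded A" by (rule positive_op_cbounded[OF P])
  obtain ps where ps: "\<And>n t. t \<in> {0..onorm A} \<Longrightarrow> \<bar>poly (ps n) t - f t\<bar> \<le> 1 / (real n + 1)"
    and lim_ps: "\<And>x. (\<lambda>n. opoly (ps n) A x) \<longlonglongrightarrow> fcalc f A x" using fcalc_approx[OF f] by blast
  obtain qs where qs: "\<And>n t. t \<in> {0..onorm A} \<Longrightarrow> \<bar>poly (qs n) t - g t\<bar> \<le> 1 / (real n + 1)"
    and lim_qs: "\<And>x. (\<lambda>n. opoly (qs n) A x) \<longlonglongrightarrow> fcalc g A x" using fcalc_approx[OF g] by blast
  obtain Mf where Mf: "\<And>t. t \<in> {0..onorm A} \<Longrightarrow> \<bar>f t\<bar> \<le> Mf"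
    using continuous_on_Icc_abs_bound[OF f] by blast
  obtain Mg where Mg: "\<And>t. t \<in> {0..onorm A} \<Longrightarrow> \<bar>g t\<bar> \<le> Mg"
    using continuous_on_Icc_abs_bound[OF g] by blast
  have ps_bound: "\<bar>poly (ps n) t\<bar> \<le> Mf + 1" if "t \<in> {0..onorm A}" for n t
    using ps[OF that, of n] Mf[OF that] divide_le_eq_1[of 1 "real n + 1"] by linarith
  have "(\<lambda>n. opoly (ps n * qs n) A x) \<longlonglongrightarrow> fcalc (\<lambda>t. f t * g t) A x"
  proof (rule fcalc_tendsto[OF continuous_on_mult[OF f g] _
        tendsto_mult_right_zero[OF inv_Suc_tendsto, of "Mf + 1 + Mg"]])
    fix n t assume t: "t \<in> {0..onorm A}"
    have "\<bar>poly (ps n * qs n) t - f t * g t\<bar>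
        \<le> \<bar>poly (ps n) t\<bar> * \<bar>poly (qs n) t - g t\<bar> + \<bar>g t\<bar> * \<bar>poly (ps n) t - f t\<bar>"
      using abs_mult_diff_le by simp
    also have "\<dots> \<le> (Mf + 1) * (1 / (real n + 1)) + Mg * (1 / (real n + 1))"
      using ps_bound[OF t, of n] qs[OF t, of n] Mg[OF t] ps[OF t, of n]
      by (intro add_mono mult_mono) auto
    also have "\<dots> = (Mf + 1 + Mg) * (1 / (real n + 1))" by (rule distrib_right[symmetric])
    finally show "\<bar>poly (ps n * qs n) t - f t * g t\<bar> \<le> (Mf + 1 + Mg) * (1 / (real n + 1))" .
  qed
  moreover have "(\<lambda>n. opoly (ps n * qs n) A x) \<longlonglongrightarrow> fcalc f A (fcalc g A x)"
    unfolding opoly_mult[OF A]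
    by (rule tendsto_apply_uniformly_bounded[OF lim_ps _ norm_opoly_le[OF P ps_bound] lim_qs])
      (rule cbounded_diff[OF opoly_cbounded[OF A]])
  ultimately show ?thesis by (rule LIMSEQ_unique)
qed

lemma fcalc_const: "fcalc (\<lambda>t. c) A x = c *\<^sub>R x"
  using fcalc_poly[of "[:c:]" x] fcalc_cong[of "poly [:c:]" "\<lambda>t. c" x]
  by (simp add: opoly_const)

lemma fcalc_id: "fcalc (\<lambda>t. t) A x = A x"
  using fcalc_poly[of "[:0,1:]" x] fcalc_cong[of "poly [:0,1:]" "\<lambda>t. t" x]
  by (simp add: opoly_X[OF positive_op_cbounded[OF P]])

lemma fcalc_diff:
  assumes f: "continuous_on {0..onorm A} f" and g: "continuous_on {0..onorm A} g"
  shows "fcalc (\<lambda>t. f t - g t) A x = fcalc f A x - fcalc g A x"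
  using fcalc_lincomb[OF f g, of 1 "-1" x] by simp

lemma fcalc_add_const:
  assumes f: "continuous_on {0..onorm A} f"
  shows "fcalc (\<lambda>t. f t + c) A x = fcalc f A x + c *\<^sub>R x"
  using fcalc_lincomb[OF f continuous_on_const[where c=1], where a=1 and b=c and x=x]
  by (simp add: fcalc_const)

lemma fcalc_mono:
  assumes f: "continuous_on {0..onorm A} f" and g: "continuous_on {0..onorm A} g"
    and le: "\<And>t. t \<in> {0..onorm A} \<Longrightarrow> f t \<le> g t"
  shows "Re (cinner (fcalc f A x) x) \<le> Re (cinner (fcalc g A x) x)"
proof -
  have "0 \<le> Re (cinner (fcalc (\<lambda>t. g t - f t) A x) x)"
    by (rule fcalc_nonneg[OF continuous_on_diff[OF g f]]) (use le in simp)
  then show ?thesis by (simp add: fcalc_diff[OF g f] cinner_diff_left)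
qed

lemma fcalc_inverse:
  assumes f: "continuous_on {0..onorm A} f" and g: "continuous_on {0..onorm A} g"
    and inv: "\<And>t. t \<in> {0..onorm A} \<Longrightarrow> f t * g t = 1"
  shows "fcalc f A (fcalc g A y) = y"
proof -
  have "fcalc f A (fcalc g A y) = fcalc (\<lambda>t. f t * g t) A y" by (rule fcalc_mult[OF f g, symmetric])
  also have "\<dots> = fcalc (\<lambda>t. 1) A y" by (rule fcalc_cong[OF continuous_on_mult[OF f g] inv])
  finally show ?thesis by (simp add: fcalc_const)
qed

lemma power2_norm_fcalc:
  assumes h: "continuous_on {0..onorm A} h"
  shows "Re (cinner (fcalc (\<lambda>t. h t * h t) A x) x) = (norm (fcalc h A x))^2"
proof -
  have "cinner (fcalc h A (fcalc h A x)) x = cinner (fcalc h A x) (fcalc h A x)"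
    using selfadjoint_fcalc[OF h] unfolding selfadjoint_def by blast
  then show ?thesis by (simp add: fcalc_mult[OF h h] Re_cinner_self)
qed

end

lemma continuous_on_Icc_if_Ici:
  fixes f :: "real \<Rightarrow> real"
  shows "continuous_on {0..} f \<Longrightarrow> continuous_on {0..c} f"
  by (rule continuous_on_subset) auto

lemma continuous_on_comp_sqrt:
  fixes f :: "real \<Rightarrow> real"
  assumes "continuous_on {0..} f"
  shows "continuous_on {0..} (\<lambda>t. f (sqrt t))"
proof -
  have "continuous_on {0..} sqrt" by (intro continuous_intros)
  moreover have "sqrt ` {0..} \<subseteq> {0..}" by auto
  ultimately show ?thesis using continuous_on_compose2[OF assms] by blast
qed

context
  fixes A :: "'a::{complex_inner,complete_space} \<Rightarrow> 'a"
  assumes P: "positive_op A"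
begin

lemma positive_op_fcalc_sqrt: "positive_op (fcalc sqrt A)"
  by (rule positive_op_fcalc[OF P]) (auto intro: continuous_intros)

lemma fcalc_sqrt_sqrt: "fcalc sqrt A (fcalc sqrt A x) = A x"
proof -
  have "fcalc sqrt A (fcalc sqrt A x) = fcalc (\<lambda>t. sqrt t * sqrt t) A x"
    by (rule fcalc_mult[OF P, symmetric]) (auto intro: continuous_intros)
  also have "\<dots> = fcalc (\<lambda>t. t) A x"
    by (rule fcalc_cong[OF P]) (auto intro: continuous_intros)
  finally show ?thesis by (simp add: fcalc_id[OF P])
qed

lemma sqrt_onorm_le_onorm_fcalc_sqrt: "sqrt (onorm A) \<le> onorm (fcalc sqrt A)"
proof -
  have "A = fcalc sqrt A \<circ> fcalc sqrt A" by (simp add: fun_eq_iff fcalc_sqrt_sqrt)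
  moreover have "bounded_linear (fcalc sqrt A)"
    by (rule cbounded_bounded_linear[OF positive_op_cbounded[OF positive_op_fcalc_sqrt]])
  ultimately have "onorm A \<le> (onorm (fcalc sqrt A))^2" by (metis onorm_compose power2_eq_square)
  then show ?thesis by (rule real_le_lsqrt[OF positive_op_onorm_nonneg[OF positive_op_fcalc_sqrt]])
qed

lemma opoly_fcalc_sqrt: "opoly q (fcalc sqrt A) x = fcalc (\<lambda>t. poly q (sqrt t)) A x"
proof (induction q arbitrary: x)
  case 0
  have "fcalc (\<lambda>t. poly 0 (sqrt t)) A x = fcalc (\<lambda>t. 0) A x" by (rule fcalc_cong[OF P]) auto
  then show ?case by (simp add: fcalc_const[OF P])
next
  case (pCons a q)
  have c1: "continuous_on {0..onorm A} (\<lambda>t. poly q (sqrt t))" by (intro continuous_intros)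
  have c2: "continuous_on {0..onorm A} (\<lambda>t. sqrt t * poly q (sqrt t))" by (intro continuous_intros)
  have "opoly (pCons a q) (fcalc sqrt A) x = a *\<^sub>R x + fcalc sqrt A (opoly q (fcalc sqrt A) x)"
    by (rule opoly_pCons[OF positive_op_cbounded[OF positive_op_fcalc_sqrt]])
  also have "fcalc sqrt A (opoly q (fcalc sqrt A) x) = fcalc (\<lambda>t. sqrt t * poly q (sqrt t)) A x"
    unfolding pCons.IH by (rule fcalc_mult[OF P _ c1, symmetric]) (auto intro: continuous_intros)
  also have "a *\<^sub>R x + fcalc (\<lambda>t. sqrt t * poly q (sqrt t)) A x
      = a *\<^sub>R fcalc (\<lambda>t. 1) A x + 1 *\<^sub>R fcalc (\<lambda>t. sqrt t * poly q (sqrt t)) A x"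
    by (simp add: fcalc_const[OF P])
  also have "\<dots> = fcalc (\<lambda>t. a * 1 + 1 * (sqrt t * poly q (sqrt t))) A x"
    by (rule fcalc_lincomb[OF P continuous_on_const c2, symmetric])
  also have "\<dots> = fcalc (\<lambda>t. poly (pCons a q) (sqrt t)) A x"
    by (rule fcalc_cong[OF P]) (use continuous_on_add[OF continuous_on_const c2, of a] in auto)
  finally show ?case .
qed

lemma fcalc_fcalc_sqrt:
  assumes f: "continuous_on {0..} f"
  shows "fcalc f (fcalc sqrt A) x = fcalc (\<lambda>t. f (sqrt t)) A x"
proof -
  have fS: "continuous_on {0..onorm (fcalc sqrt A)} f" by (rule continuous_on_Icc_if_Ici[OF f])
  have fA: "continuous_on {0..onorm A} (\<lambda>t. f (sqrt t))"
    by (rule continuous_on_Icc_if_Ici[OF continuous_on_comp_sqrt[OF f]])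
  obtain qs where qs: "\<And>n t. t \<in> {0..onorm (fcalc sqrt A)} \<Longrightarrow> \<bar>poly (qs n) t - f t\<bar> \<le> 1 / (real n + 1)"
    using poly_approx_seq[OF fS] by blast
  have "(\<lambda>n. opoly (qs n) (fcalc sqrt A) x) \<longlonglongrightarrow> fcalc f (fcalc sqrt A) x"
    by (rule fcalc_tendsto[OF positive_op_fcalc_sqrt fS qs inv_Suc_tendsto])
  moreover have "(\<lambda>n. opoly (qs n) (fcalc sqrt A) x) \<longlonglongrightarrow> fcalc (\<lambda>t. f (sqrt t)) A x"
  proof (rule tendsto_if_norm_diff_le)
    fix n
    have cq: "continuous_on {0..onorm A} (\<lambda>t. poly (qs n) (sqrt t))" by (intro continuous_intros)
    have "opoly (qs n) (fcalc sqrt A) x - fcalc (\<lambda>t. f (sqrt t)) A x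
        = fcalc (\<lambda>t. poly (qs n) (sqrt t) - f (sqrt t)) A x"
      by (simp add: opoly_fcalc_sqrt fcalc_diff[OF P cq fA])
    also have "norm \<dots> \<le> (1 / (real n + 1)) * norm x"
    proof (rule norm_fcalc_le[OF P continuous_on_diff[OF cq fA]])
      fix t assume t: "t \<in> {0..onorm A}"
      then have "sqrt t \<le> sqrt (onorm A)" by simp
      then have "sqrt t \<le> onorm (fcalc sqrt A)" using sqrt_onorm_le_onorm_fcalc_sqrt by linarith
      then show "\<bar>poly (qs n) (sqrt t) - f (sqrt t)\<bar> \<le> 1 / (real n + 1)" using qs t by auto
    qed
    finally show "norm (opoly (qs n) (fcalc sqrt A) x - fcalc (\<lambda>t. f (sqrt t)) A x)
        \<le> 1 / (real n + 1) * norm x" .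
  next
    show "(\<lambda>n. 1 / (real n + 1) * norm x) \<longlonglongrightarrow> 0"
      by (rule tendsto_mult_left_zero[OF inv_Suc_tendsto])
  qed
  ultimately show ?thesis by (rule LIMSEQ_unique)
qed

end

section \<open>The mixed Schwarz inequality\<close>

lemma adj_opoly_intertwine:
  assumes X: "cbounded (X::'a::{complex_inner,complete_space} \<Rightarrow> 'a)"
  shows "adj X (opoly p (X \<circ> adj X) (X x)) = opoly p (adj X \<circ> X) ((adj X \<circ> X) x)"
proof (induction p arbitrary: x)
  case 0 then show ?case using cbounded_zero[OF cbounded_adj[OF X]] by simp
next
  case (pCons a p)
  have aX: "cbounded (adj X)" by (rule cbounded_adj[OF X])
  have B: "cbounded (X \<circ> adj X)" by (rule cbounded_o[OF X aX])
  have A: "cbounded (adj X \<circ> X)" by (rule cbounded_o[OF aX X])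
  have "adj X (opoly (pCons a p) (X \<circ> adj X) (X x))
      = a *\<^sub>R adj X (X x) + adj X (X (adj X (opoly p (X \<circ> adj X) (X x))))"
    by (simp add: opoly_pCons[OF B] cbounded_add[OF aX] cbounded_scaleR[OF aX])
  also have "\<dots> = a *\<^sub>R (adj X \<circ> X) x + (adj X \<circ> X) (opoly p (adj X \<circ> X) ((adj X \<circ> X) x))"
    using pCons.IH[of x] by (simp add: comp_def)
  also have "\<dots> = opoly (pCons a p) (adj X \<circ> X) ((adj X \<circ> X) x)"
    by (simp add: opoly_pCons[OF A] opoly_commute[OF A])
  finally show ?case .
qed

lemma adj_fcalc_intertwine:
  assumes X: "cbounded (X::'a::{complex_inner,complete_space} \<Rightarrow> 'a)"
    and h: "continuous_on {0..} h"
  shows "adj X (fcalc h (X \<circ> adj X) (X x)) = fcalc (\<lambda>t. h t * t) (adj X \<circ> X) x"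
proof -
  define A where "A = adj X \<circ> X"
  define B where "B = X \<circ> adj X"
  have PA: "positive_op A" unfolding A_def by (rule positive_op_adj_comp[OF X])
  have PB: "positive_op B" unfolding B_def by (rule positive_op_comp_adj[OF X])
  define c where "c = max (onorm A) (onorm B)"
  obtain ps where ps: "\<And>n t. t \<in> {0..c} \<Longrightarrow> \<bar>poly (ps n) t - h t\<bar> \<le> 1 / (real n + 1)"
    using poly_approx_seq[OF continuous_on_Icc_if_Ici[OF h]] by blast
  have "(\<lambda>n. opoly (ps n) B (X x)) \<longlonglongrightarrow> fcalc h B (X x)"
    by (rule fcalc_tendsto[OF PB continuous_on_Icc_if_Ici[OF h] _ inv_Suc_tendsto])
      (use ps in \<open>auto simp: c_def\<close>)
  then have "(\<lambda>n. adj X (opoly (ps n) B (X x))) \<longlonglongrightarrow> adj X (fcalc h B (X x))"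
    by (rule tendsto_cbounded[OF cbounded_adj[OF X]])
  moreover have "(\<lambda>n. opoly (ps n) A (A x)) \<longlonglongrightarrow> fcalc h A (A x)"
    by (rule fcalc_tendsto[OF PA continuous_on_Icc_if_Ici[OF h] _ inv_Suc_tendsto])
      (use ps in \<open>auto simp: c_def\<close>)
  moreover have "adj X (opoly (ps n) B (X x)) = opoly (ps n) A (A x)" for n
    unfolding A_def B_def by (rule adj_opoly_intertwine[OF X])
  ultimately have "adj X (fcalc h B (X x)) = fcalc h A (A x)" using LIMSEQ_unique by auto
  also have "\<dots> = fcalc h A (fcalc (\<lambda>t. t) A x)" by (simp add: fcalc_id[OF PA])
  also have "\<dots> = fcalc (\<lambda>t. h t * t) A x"
    by (rule fcalc_mult[OF PA, symmetric]) (auto intro: continuous_intros continuous_on_Icc_if_Ici[OF h])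
  finally show ?thesis unfolding A_def B_def .
qed

lemma divide_add_le_if_mult_eq:
  fixes a b t \<epsilon> :: real
  assumes "0 \<le> a" "0 \<le> b" "a * b = t" "0 < \<epsilon>"
  shows "t / (b + \<epsilon>) \<le> a"
  using assms mult_nonneg_nonneg[of a \<epsilon>] by (simp add: pos_divide_le_eq distrib_left)

text \<open>The regularisation by \<epsilon> makes b + \<epsilon> invertible even where b vanishes; then
  <Xx,y> = <K Xx, M y> with K = (b+\<epsilon>)^(-1)(XX*) and M = (b+\<epsilon>)(XX*), and the Cauchy-Schwarz
  inequality for the positive operator K gives the bound, since X*KX = (t/(b t+\<epsilon>))(X*X) \<le> a(X*X).\<close>
lemma mixed_Schwarz_eps:
  fixes X :: "'a::{complex_inner,complete_space} \<Rightarrow> 'a" and a b :: "real \<Rightarrow> real"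
  assumes X: "cbounded X" and a: "continuous_on {0..} a" and b: "continuous_on {0..} b"
    and a0: "\<And>t. 0 \<le> t \<Longrightarrow> 0 \<le> a t" and b0: "\<And>t. 0 \<le> t \<Longrightarrow> 0 \<le> b t"
    and ab: "\<And>t. 0 \<le> t \<Longrightarrow> a t * b t = t" and \<epsilon>: "0 < \<epsilon>"
  shows "(cmod (cinner (X x) y))^2 \<le> Re (cinner (fcalc a (adj X \<circ> X) x) x)
      * (Re (cinner (fcalc b (X \<circ> adj X) y) y) + \<epsilon> * (norm y)^2)"
proof -
  define A where "A = adj X \<circ> X"
  define B where "B = X \<circ> adj X"
  have PA: "positive_op A" unfolding A_def by (rule positive_op_adj_comp[OF X])
  have PB: "positive_op B" unfolding B_def by (rule positive_op_comp_adj[OF X])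
  define k where "k t = 1 / (b t + \<epsilon>)" for t
  have b\<epsilon>: "0 < b t + \<epsilon>" if "0 \<le> t" for t using b0[OF that] \<epsilon> by simp
  have k: "continuous_on {0..} k"
    unfolding k_def using b b\<epsilon> by (intro continuous_intros) (auto simp: less_imp_neq[symmetric])
  have bB: "continuous_on {0..onorm B} (\<lambda>t. b t + \<epsilon>)"
    using continuous_on_Icc_if_Ici[OF b] by (intro continuous_intros)
  define K where "K = fcalc k B"
  define M where "M = fcalc (\<lambda>t. b t + \<epsilon>) B"
  have PK: "positive_op K"
    unfolding K_def using b\<epsilon> by (intro positive_op_fcalc[OF PB continuous_on_Icc_if_Ici[OF k]])
      (auto simp: k_def intro!: less_imp_le)
  have KM: "K (M y) = y"
    unfolding K_def M_def using b\<epsilon>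
    by (intro fcalc_inverse[OF PB continuous_on_Icc_if_Ici[OF k] bB]) (auto simp: k_def dest!: b\<epsilon>)
  have KX: "Re (cinner (K (X x)) (X x)) \<le> Re (cinner (fcalc a A x) x)"
  proof -
    have "Re (cinner (K (X x)) (X x)) = Re (cinner (fcalc (\<lambda>t. k t * t) A x) x)"
      by (simp add: cinner_adj_left[OF X, symmetric] K_def A_def B_def adj_fcalc_intertwine[OF X k])
    also have "\<dots> \<le> Re (cinner (fcalc a A x) x)"
    proof (rule fcalc_mono[OF PA])
      show "continuous_on {0..onorm A} (\<lambda>t. k t * t)"
        using continuous_on_Icc_if_Ici[OF k] by (intro continuous_intros)
      show "continuous_on {0..onorm A} a" by (rule continuous_on_Icc_if_Ici[OF a])
      fix t :: real assume "t \<in> {0..onorm A}"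
      then have t: "0 \<le> t" by simp
      show "k t * t \<le> a t"
        using divide_add_le_if_mult_eq[OF a0[OF t] b0[OF t] ab[OF t] \<epsilon>] by (simp add: k_def)
    qed
    finally show ?thesis .
  qed
  have KM_form: "Re (cinner (K (M y)) (M y)) = Re (cinner (fcalc b B y) y) + \<epsilon> * (norm y)^2"
  proof -
    have "Re (cinner (K (M y)) (M y)) = Re (cinner (M y) y)"
      using cinner_cnj[of y "M y"] by (simp add: KM)
    moreover have "M y = fcalc b B y + \<epsilon> *\<^sub>R y"
      unfolding M_def by (rule fcalc_add_const[OF PB continuous_on_Icc_if_Ici[OF b]])
    ultimately show ?thesis by (simp add: cinner_add_left cinner_scaleR_left Re_cinner_self)
  qed
  have "0 \<le> Re (cinner (fcalc b B y) y)"
    using b0 by (intro fcalc_nonneg[OF PB continuous_on_Icc_if_Ici[OF b]]) simp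
  then have M_nonneg: "0 \<le> Re (cinner (fcalc b B y) y) + \<epsilon> * (norm y)^2" using \<epsilon> by simp
  have "(cmod (cinner (X x) y))^2 = (cmod (cinner (K (X x)) (M y)))^2"
    by (simp add: positive_op_selfadjoint[OF PK] KM)
  also have "\<dots> \<le> Re (cinner (K (X x)) (X x)) * Re (cinner (K (M y)) (M y))"
    by (rule positive_op_Cauchy_Schwarz[OF PK])
  also have "\<dots> \<le> Re (cinner (fcalc a A x) x) * (Re (cinner (fcalc b B y) y) + \<epsilon> * (norm y)^2)"
    unfolding KM_form by (rule mult_right_mono[OF KX M_nonneg])
  finally show ?thesis unfolding A_def B_def .
qed

lemma mixed_Schwarz:
  fixes X :: "'a::{complex_inner,complete_space} \<Rightarrow> 'a" and a b :: "real \<Rightarrow> real"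
  assumes X: "cbounded X" and a: "continuous_on {0..} a" and b: "continuous_on {0..} b"
    and a0: "\<And>t. 0 \<le> t \<Longrightarrow> 0 \<le> a t" and b0: "\<And>t. 0 \<le> t \<Longrightarrow> 0 \<le> b t"
    and ab: "\<And>t. 0 \<le> t \<Longrightarrow> a t * b t = t"
  shows "(cmod (cinner (X x) y))^2
    \<le> Re (cinner (fcalc a (adj X \<circ> X) x) x) * Re (cinner (fcalc b (X \<circ> adj X) y) y)"
proof (rule field_le_epsilon)
  fix e :: real assume e: "0 < e"
  define K where "K = Re (cinner (fcalc a (adj X \<circ> X) x) x) * (norm y)^2"
  have "0 \<le> Re (cinner (fcalc a (adj X \<circ> X) x) x)"
    using a0 by (intro fcalc_nonneg[OF positive_op_adj_comp[OF X] continuous_on_Icc_if_Ici[OF a]]) simp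
  then have K: "0 \<le> K" by (simp add: K_def)
  have "(cmod (cinner (X x) y))^2 \<le> Re (cinner (fcalc a (adj X \<circ> X) x) x)
      * (Re (cinner (fcalc b (X \<circ> adj X) y) y) + e / (K + 1) * (norm y)^2)"
    using e K by (intro mixed_Schwarz_eps[OF X a b a0 b0 ab] divide_pos_pos) simp_all
  also have "\<dots> = Re (cinner (fcalc a (adj X \<circ> X) x) x) * Re (cinner (fcalc b (X \<circ> adj X) y) y)
      + e * (K / (K + 1))"
    by (simp add: K_def algebra_simps)
  also have "e * (K / (K + 1)) \<le> e" using e K by (intro mult_left_le) (simp_all add: divide_le_eq_1)
  finally show "(cmod (cinner (X x) y))^2
      \<le> Re (cinner (fcalc a (adj X \<circ> X) x) x) * Re (cinner (fcalc b (X \<circ> adj X) y) y) + e"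
    by (simp add: comp_def)
qed

lemma fcalc_oabs:
  assumes X: "cbounded (X::'a::{complex_inner,complete_space} \<Rightarrow> 'a)" and f: "continuous_on {0..} f"
  shows "fcalc f (oabs X) x = fcalc (\<lambda>t. f (sqrt t)) (adj X \<circ> X) x"
  unfolding oabs_def by (rule fcalc_fcalc_sqrt[OF positive_op_adj_comp[OF X] f])

lemma fcalc_oabs_adj:
  assumes X: "cbounded (X::'a::{complex_inner,complete_space} \<Rightarrow> 'a)" and f: "continuous_on {0..} f"
  shows "fcalc f (oabs (adj X)) x = fcalc (\<lambda>t. f (sqrt t)) (X \<circ> adj X) x"
  unfolding oabs_def adj_adj[OF X] by (rule fcalc_fcalc_sqrt[OF positive_op_comp_adj[OF X] f])

lemma positive_op_fcalc_oabs:
  assumes X: "cbounded (X::'a::{complex_inner,complete_space} \<Rightarrow> 'a)"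
    and f: "continuous_on {0..} f" and f0: "\<And>t. 0 \<le> t \<Longrightarrow> 0 \<le> f t"
  shows "positive_op (fcalc f (oabs X))"
  unfolding oabs_def using f0
  by (intro positive_op_fcalc[OF positive_op_fcalc_sqrt[OF positive_op_adj_comp[OF X]]]
      continuous_on_Icc_if_Ici[OF f]) simp

theorem Kittaneh_mixed_Schwarz:
  fixes X :: "'a::{complex_inner,complete_space} \<Rightarrow> 'a" and f g :: "real \<Rightarrow> real"
  assumes X: "cbounded X" and f: "continuous_on {0..} f" and g: "continuous_on {0..} g"
    and f0: "\<And>t. 0 \<le> t \<Longrightarrow> 0 \<le> f t" and g0: "\<And>t. 0 \<le> t \<Longrightarrow> 0 \<le> g t"
    and fg: "\<And>t. 0 \<le> t \<Longrightarrow> f t * g t = t"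
  shows "cmod (cinner (X x) y) \<le> norm (fcalc f (oabs X) x) * norm (fcalc g (oabs (adj X)) y)"
proof -
  have fs: "continuous_on {0..} (\<lambda>t. f (sqrt t))" by (rule continuous_on_comp_sqrt[OF f])
  have gs: "continuous_on {0..} (\<lambda>t. g (sqrt t))" by (rule continuous_on_comp_sqrt[OF g])
  have "(cmod (cinner (X x) y))^2
      \<le> Re (cinner (fcalc (\<lambda>t. f (sqrt t) * f (sqrt t)) (adj X \<circ> X) x) x)
        * Re (cinner (fcalc (\<lambda>t. g (sqrt t) * g (sqrt t)) (X \<circ> adj X) y) y)"
  proof (rule mixed_Schwarz[OF X])
    show "continuous_on {0..} (\<lambda>t. f (sqrt t) * f (sqrt t))" using fs by (intro continuous_intros)
    show "continuous_on {0..} (\<lambda>t. g (sqrt t) * g (sqrt t))" using gs by (intro continuous_intros)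
    fix t :: real assume t: "0 \<le> t"
    show "0 \<le> f (sqrt t) * f (sqrt t)" "0 \<le> g (sqrt t) * g (sqrt t)" by simp_all
    have "(f (sqrt t) * g (sqrt t)) * (f (sqrt t) * g (sqrt t)) = t" using fg[of "sqrt t"] t by simp
    then show "f (sqrt t) * f (sqrt t) * (g (sqrt t) * g (sqrt t)) = t" by (simp add: ac_simps)
  qed
  also have "\<dots> = (norm (fcalc f (oabs X) x) * norm (fcalc g (oabs (adj X)) y))^2"
    by (simp add: power2_norm_fcalc[OF positive_op_adj_comp[OF X] continuous_on_Icc_if_Ici[OF fs]]
        power2_norm_fcalc[OF positive_op_comp_adj[OF X] continuous_on_Icc_if_Ici[OF gs]]
        fcalc_oabs[OF X f] fcalc_oabs_adj[OF X g] power_mult_distrib)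
  finally show ?thesis by (rule power2_le_imp_le) simp
qed

section \<open>McCarty's inequality\<close>

lemma powr_above_tangent:
  fixes r u s :: real
  assumes r: "1 \<le> r" and u: "0 < u" and s: "0 \<le> s"
  shows "u powr r + r * u powr (r - 1) * (s - u) \<le> s powr r"
proof (cases "s = 0")
  case True
  have "u powr r + r * u powr (r - 1) * (s - u) = u powr r * (1 - r)"
    using True u by (simp add: powr_diff algebra_simps)
  also have "\<dots> \<le> 0" using r by (simp add: mult_nonneg_nonpos)
  finally show ?thesis using True by simp
next
  case False
  have "((\<lambda>z. z powr r) has_field_derivative r * u powr (r - 1)) (at u within {0<..})"
    using has_real_derivative_powr[OF u] by (rule has_field_derivative_at_within)
  then have "r * u powr (r - 1) * (s - u) \<le> s powr r - u powr r"
    using u s False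
    by (intro convex_on_imp_above_tangent[OF powr_convex[OF r] convex_connected[OF convex_real_interval(3)]])
      (auto simp: interior_open)
  then show ?thesis by simp
qed

lemma powr_double: "(t::real) powr (2 * r) = (t * t) powr r"
  by (simp add: powr_mult powr_add[symmetric])

text \<open>The tangent line of s \<mapsto> s^r at s = \<parallel>Fx\<parallel>^2 bounds t^(2r) from below by an affine
  function of t^2, whose value on F is computed exactly.\<close>
theorem McCarty_inequality:
  fixes F :: "'a::{complex_inner,complete_space} \<Rightarrow> 'a"
  assumes F: "positive_op F" and r: "1 \<le> r" and x: "norm x = 1"
  shows "norm (F x) powr (2 * r) \<le> Re (cinner (fcalc (\<lambda>t. t powr (2 * r)) F x) x)"
proof (cases "F x = 0")
  case True
  have "continuous_on {0..onorm F} (\<lambda>t. t powr (2 * r))"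
    using r by (intro continuous_on_powr' continuous_intros) auto
  then show ?thesis using True by (simp add: fcalc_nonneg[OF F])
next
  case False
  define u where "u = (norm (F x))^2"
  have u: "0 < u" using False by (simp add: u_def)
  define \<alpha> where "\<alpha> = u powr r - r * u powr (r - 1) * u"
  define \<beta> where "\<beta> = r * u powr (r - 1)"
  have square: "continuous_on {0..onorm F} (\<lambda>t. t * t)" by (intro continuous_intros)
  have "\<alpha> + \<beta> * u = Re (cinner (fcalc (\<lambda>t. \<alpha> * 1 + \<beta> * (t * t)) F x) x)"
    using fcalc_lincomb[OF F continuous_on_const[where c=1] square, where a=\<alpha> and b=\<beta> and x=x]
      power2_norm_fcalc[OF F continuous_on_id, of x] x
    by (simp add: fcalc_const[OF F] fcalc_id[OF F] cinner_add_left cinner_scaleR_left Re_cinner_self u_def)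
  also have "\<dots> \<le> Re (cinner (fcalc (\<lambda>t. t powr (2 * r)) F x) x)"
  proof (rule fcalc_mono[OF F])
    show "continuous_on {0..onorm F} (\<lambda>t. \<alpha> * 1 + \<beta> * (t * t))" by (intro continuous_intros)
    show "continuous_on {0..onorm F} (\<lambda>t. t powr (2 * r))"
      using r by (intro continuous_on_powr' continuous_intros) auto
    fix t assume "t \<in> {0..onorm F}"
    then show "\<alpha> * 1 + \<beta> * (t * t) \<le> t powr (2 * r)"
      using powr_above_tangent[OF r u, of "t * t"] powr_double[of t r]
      by (simp add: \<alpha>_def \<beta>_def algebra_simps)
  qed
  also have "\<alpha> + \<beta> * u = norm (F x) powr (2 * r)"
    by (simp add: \<alpha>_def \<beta>_def u_def powr_double power2_eq_square)
  finally show ?thesis .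
qed

lemma powr_AM_GM:
  fixes a b c r :: real
  assumes "0 \<le> a" "0 \<le> b" "0 \<le> c" "c \<le> a * b" "0 \<le> r"
  shows "c powr r \<le> (a powr (2 * r) + b powr (2 * r)) / 2"
proof -
  have "c powr r \<le> a powr r * b powr r" using assms by (simp add: powr_mono2 powr_mult[symmetric])
  also have "\<dots> \<le> ((a powr r)^2 + (b powr r)^2) / 2"
    using sum_squares_bound[of "a powr r" "b powr r"] by simp
  also have "\<dots> = (a powr (2 * r) + b powr (2 * r)) / 2"
    by (simp add: power2_eq_square powr_double powr_mult)
  finally show ?thesis .
qed

lemma cbounded_fcalc_powr:
  fixes F :: "'a::{complex_inner,complete_space} \<Rightarrow> 'a"
  assumes "positive_op F" "1 \<le> r"
  shows "cbounded (fcalc (\<lambda>t. t powr (2 * r)) F)"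
proof (rule fcalc_cbounded[OF assms(1)])
  show "continuous_on {0..onorm F} (\<lambda>t. t powr (2 * r))"
    using assms(2) by (intro continuous_on_powr' continuous_intros) auto
qed

lemma cmod_cinner_powr_le:
  fixes X :: "'a::{complex_inner,complete_space} \<Rightarrow> 'a" and f g :: "real \<Rightarrow> real"
  assumes X: "cbounded X" and f: "continuous_on {0..} f" and g: "continuous_on {0..} g"
    and f0: "\<And>t. t \<ge> 0 \<Longrightarrow> f t \<ge> 0" and g0: "\<And>t. t \<ge> 0 \<Longrightarrow> g t \<ge> 0"
    and fg: "\<And>t. t \<ge> 0 \<Longrightarrow> f t * g t = t" and x: "norm x = 1" and r: "r \<ge> 1"
  shows "cmod (cinner (X x) x) powr r \<le>
     (Re (cinner (fcalc (\<lambda>t. t powr (2 * r)) (fcalc f (oabs X)) x) x)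
    + Re (cinner (fcalc (\<lambda>t. t powr (2 * r)) (fcalc g (oabs (adj X))) x) x)) / 2"
proof -
  have "cmod (cinner (X x) x) powr r
      \<le> (norm (fcalc f (oabs X) x) powr (2 * r) + norm (fcalc g (oabs (adj X)) x) powr (2 * r)) / 2"
    using r by (intro powr_AM_GM Kittaneh_mixed_Schwarz[OF X f g f0 g0 fg]) simp_all
  also have "\<dots> \<le> (Re (cinner (fcalc (\<lambda>t. t powr (2 * r)) (fcalc f (oabs X)) x) x)
    + Re (cinner (fcalc (\<lambda>t. t powr (2 * r)) (fcalc g (oabs (adj X))) x) x)) / 2"
    using McCarty_inequality[OF positive_op_fcalc_oabs[OF X f f0] r x]
      McCarty_inequality[OF positive_op_fcalc_oabs[OF cbounded_adj[OF X] g g0] r x]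
    by simp
  finally show ?thesis .
qed

theorem theorem2p5:
  fixes X Y :: "'a::{complex_inner, complete_space} \<Rightarrow> 'a"
    and f g :: "real \<Rightarrow> real" and x :: 'a and r s :: real
  assumes "cbounded X" and "cbounded Y"
    and "continuous_on {0..} f" and "continuous_on {0..} g"
    and "\<And>t. t \<ge> 0 \<Longrightarrow> f t \<ge> 0" and "\<And>t. t \<ge> 0 \<Longrightarrow> g t \<ge> 0"
    and "\<And>t. t \<ge> 0 \<Longrightarrow> f t * g t = t"
    and "norm x = 1" and "r \<ge> 1" and "s \<ge> 1"
  shows "cmod (cinner (X x) x) powr r + cmod (cinner (Y x) x) powr s
    \<le> 1/2 * onorm (\<lambda>z.
          fcalc (\<lambda>t. t powr (2 * r)) (fcalc f (oabs X)) z
        + fcalc (\<lambda>t. t powr (2 * r)) (fcalc g (oabs (adj X))) z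
        + fcalc (\<lambda>t. t powr (2 * s)) (fcalc f (oabs Y)) z
        + fcalc (\<lambda>t. t powr (2 * s)) (fcalc g (oabs (adj Y))) z)"
proof -
  note X = assms(1) and Y = assms(2) and fg = assms(3-7) and x = assms(8) and r = assms(9) and s = assms(10)
  define T where "T = (\<lambda>z.
          fcalc (\<lambda>t. t powr (2 * r)) (fcalc f (oabs X)) z
        + fcalc (\<lambda>t. t powr (2 * r)) (fcalc g (oabs (adj X))) z
        + fcalc (\<lambda>t. t powr (2 * s)) (fcalc f (oabs Y)) z
        + fcalc (\<lambda>t. t powr (2 * s)) (fcalc g (oabs (adj Y))) z)"
  have "cbounded T"
    unfolding T_def using fg r s
    by (intro cbounded_plus cbounded_fcalc_powr positive_op_fcalc_oabs X Y cbounded_adj) auto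
  have "cmod (cinner (X x) x) powr r + cmod (cinner (Y x) x) powr s \<le> Re (cinner (T x) x) / 2"
    using cmod_cinner_powr_le[OF X fg x r] cmod_cinner_powr_le[OF Y fg x s]
    by (simp add: T_def cinner_add_left)
  also have "\<dots> \<le> onorm T / 2" using Re_cinner_le_onorm[OF \<open>cbounded T\<close>, of x] x by simp
  finally show ?thesis by (simp add: T_def)
qed

end
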